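(* Let $d\in\mathbb N$ and $\alpha\in[0,d)$. Let $\mathbf U_1,\mathbf U_2,\dots$ be independent uniform random vectors on $(0,1)^d$ and $\mathcal U_n=(\mathbf U_1,\dots,\mathbf U_n)$. Then as $n\to\infty$, $$ n^{(\alpha-d)/d}\mathcal O^{d,\alpha}(\mathcal U_n)\xrightarrow{L^1}\frac{d}{d-\alpha}v_d^{-\alpha/d}\,\Gamma(1+\alpha/d). $$
   Context: The on-line nearest-neighbour graph (ONG) on a sequence $(\mathbf x_1,\dots,\mathbf x_n)$ of points in $\mathbb R^d$ joins each $\mathbf x_i$, $i=2,\dots,n$, by an edge to its (Euclidean) nearest neighbour among $\mathbf x_1,\dots,\mathbf x_{i-1}$ (ties broken by lexicographic order). $\mathcal O^{d,\alpha}(\mathcal U_n)$ is the total power-weighted edge length $\sum_{\text{edges}}\|\mathbf u-\mathbf v\|^\alpha$ of the ONG on $\mathcal U_n$. $v_d=\pi^{d/2}/\Gamma(1+d/2)$ is the volume of the unit $d$-ball. *)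

theory Defs
  imports "HOL-Probability.Probability"
begin

text \<open>Power weight r^alpha of an edge of length r, with the convention 0^0 = 1
  (so that for alpha = 0 every edge has weight 1).\<close>
definition pow_weight :: "real \<Rightarrow> real \<Rightarrow> real" where
  "pow_weight \<alpha> r = (if r = 0 then (if \<alpha> = 0 then 1 else 0) else r powr \<alpha>)"

text \<open>Distance from point x_i to its nearest neighbour among x_0, ..., x_(i-1);
  this is the length of the edge of the on-line nearest-neighbour graph added at step i
  (independent of how ties are broken).\<close>
definition ong_nn_dist :: "(nat \<Rightarrow> 'a::metric_space) \<Rightarrow> nat \<Rightarrow> real" where
  "ong_nn_dist x i = Min ((\<lambda>j. dist (x i) (x j)) ` {..<i})"

text \<open>Total power-weighted edge length of the ONG on the sequence (x_0, ..., x_(n-1)).\<close>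
definition ong_weight :: "real \<Rightarrow> (nat \<Rightarrow> 'a::metric_space) \<Rightarrow> nat \<Rightarrow> real" where
  "ong_weight \<alpha> x n = (\<Sum>i\<in>{1..<n}. pow_weight \<alpha> (ong_nn_dist x i))"

definition unit_ball_volume :: "nat \<Rightarrow> real" where
  "unit_ball_volume d = pi powr (real d / 2) / Gamma (1 + real d / 2)"

end

theory Submission
  imports Defs
begin

(*
  Write R_i for the distance from U_i to its nearest predecessor, so that the total weight
  is the sum of R_i^alpha over 1 <= i < n. Given U_i = y, the event R_i > t says that
  U_0, ..., U_(i-1) avoid the ball B(y, t), so P(R_i > t) = E (1 - p(U, t))^i, where p(y, t)
  is the volume of the part of B(y, t) inside the cube. Integrating alpha t^(alpha-1) against
  this tail, substituting t = i^(-1/d) s and using dominated convergence gives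
  i^(alpha/d) E R_i^alpha --> Gamma(1 + alpha/d) v_d^(-alpha/d); a weighted Cesaro argument
  then yields convergence of the normalised mean to the stated constant c.

  L^1 convergence follows from E (n^((alpha-d)/d) O_n - c)^2 --> 0, which needs the
  cross moments. For i < j, the configurations in which B(U_i, t) and B(U_j, s) are disjoint
  contribute at most P(R_i > t) P(R_(j-1) > s) to P(R_i > t, R_j > s); in the others
  |U_i - U_j| <= t + s, an event of probability O((t + s)^d), while both balls are still
  empty. Hence E[R_i^alpha R_j^alpha] <= E R_i^alpha E R_(j-1)^alpha
  + K i^(-1-alpha/d) (j-1)^(-alpha/d), and the error terms are negligible after summation.
  For alpha = 0 every edge has weight 1 and the statement is deterministic.
*)

lemma add_power_le_two_power:
  fixes t s :: real
  assumes "0 \<le> t" "0 \<le> s"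
  shows "(t + s) ^ n \<le> 2 ^ n * (t ^ n + s ^ n)"
proof -
  have "(t + s) ^ n \<le> (2 * max t s) ^ n"
    using assms by (intro power_mono) auto
  also have "\<dots> = 2 ^ n * max t s ^ n"
    by (simp add: power_mult_distrib)
  also have "\<dots> \<le> 2 ^ n * (t ^ n + s ^ n)"
    using assms by (intro mult_left_mono) (auto simp: max_def)
  finally show ?thesis .
qed

lemma one_minus_disjoint_power_le:
  fixes a b :: real
  assumes "0 \<le> a" "0 \<le> b" "a + b \<le> 1" "i \<le> k"
  shows "(1 - (a + b)) ^ i * (1 - b) ^ (k - i) \<le> (1 - a) ^ i * (1 - b) ^ k"
proof -
  have "(1 - (a + b)) ^ i \<le> ((1 - a) * (1 - b)) ^ i"
    using assms by (intro power_mono) (auto simp: algebra_simps)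
  then have "(1 - (a + b)) ^ i * (1 - b) ^ (k - i) \<le> ((1 - a) * (1 - b)) ^ i * (1 - b) ^ (k - i)"
    using assms by (intro mult_right_mono) auto
  also have "\<dots> = (1 - a) ^ i * (1 - b) ^ k"
    using assms by (simp add: power_mult_distrib mult.assoc power_add[symmetric])
  finally show ?thesis .
qed

lemma one_minus_overlap_power_le:
  fixes a b u :: real
  assumes "0 \<le> a" "0 \<le> b" "a \<le> u" "b \<le> u" "u \<le> 1" "i \<le> k"
  shows "(1 - u) ^ i * (1 - b) ^ (k - i) \<le> sqrt ((1 - a) ^ i * (1 - b) ^ k)"
proof (rule real_le_rsqrt)
  have "(1 - u) ^ 2 \<le> (1 - a) * (1 - b)"
    using assms by (simp add: power2_eq_square mult_mono)
  then have "((1 - u) ^ 2) ^ i \<le> ((1 - a) * (1 - b)) ^ i"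
    using assms by (intro power_mono) auto
  moreover have "((1 - b) ^ 2) ^ (k - i) \<le> (1 - b) ^ (k - i)"
    using assms by (intro power_mono) (auto simp: power2_eq_square mult_left_le_one_le)
  ultimately have "((1 - u) ^ 2) ^ i * ((1 - b) ^ 2) ^ (k - i) \<le> ((1 - a) * (1 - b)) ^ i * (1 - b) ^ (k - i)"
    using assms by (intro mult_mono) auto
  also have "\<dots> = (1 - a) ^ i * (1 - b) ^ k"
    using assms by (simp add: power_mult_distrib mult.assoc power_add[symmetric])
  finally show "((1 - u) ^ i * (1 - b) ^ (k - i))\<^sup>2 \<le> (1 - a) ^ i * (1 - b) ^ k"
    by (simp add: power_mult_distrib power_mult[symmetric] mult.commute)
qed

lemma one_minus_power_le_exp:
  fixes x :: real assumes "0 \<le> x" "x \<le> 1"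
  shows "(1 - x) ^ n \<le> exp (- (n * x))"
proof -
  have "(1 - x) ^ n \<le> exp (- x) ^ n"
    using assms by (intro power_mono) (use exp_ge_add_one_self[of "-x"] in auto)
  also have "\<dots> = exp (- (n * x))" by (simp add: exp_of_nat_mult[symmetric])
  finally show ?thesis .
qed

lemma sqrt_exp_mult: "sqrt (exp x * exp y) = exp (x / 2) * exp (y / 2)"
  by (rule real_sqrt_unique) (simp_all add: power2_eq_square exp_add[symmetric])

section \<open>Gamma-type integrals\<close>

lemma has_integral_Gamma_power_substitution:
  fixes q lam :: real and d :: nat
  assumes q: "q > 0" and lam: "lam > 0" and d: "d > 0"
  shows "((\<lambda>t. lam * (d * t ^ (d - 1)) * ((lam * t ^ d) powr (q / d - 1) / exp (lam * t ^ d)))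
    has_integral Gamma (q / d)) {0<..}"
proof -
  define f where "f = (\<lambda>u::real. u powr (q / d - 1) / exp u)"
  define g where "g = (\<lambda>t::real. lam * t ^ d)"
  define g' where "g' = (\<lambda>t::real. lam * (d * t ^ (d - 1)))"
  have "(f has_integral Gamma (q / d)) {0..}"
    unfolding f_def using q d by (intro Gamma_integral_real) simp
  then have f_int: "(f has_integral Gamma (q / d)) {0<..}"
    by (subst has_integral_spike_set_eq[where T="{0..}"]) (auto intro: negligible_subset[of "{0}"])
  then have f_abs: "f absolutely_integrable_on {0<..}"
    by (intro nonnegative_absolutely_integrable) (auto simp: f_def has_integral_integrable)
  have g_image: "g ` {0<..} = {0<..}"
  proof safe
    fix u :: real assume "0 < u"
    define t where "t = root d (u / lam)"
    have "t > 0" using \<open>0<u\<close> lam d by (simp add: t_def)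
    moreover have "g t = u" using \<open>0<u\<close> lam d by (simp add: g_def t_def)
    ultimately show "u \<in> g ` {0<..}" by force
  qed (use lam in \<open>auto simp: g_def\<close>)
  have "inj_on g {0<..}"
    unfolding inj_on_def g_def using lam d by (auto simp: power_eq_iff_eq_base)
  moreover have "(g has_field_derivative g' t) (at t within {0<..})" for t
    unfolding g_def g'_def by (auto intro!: derivative_eq_intros)
  ultimately have "(\<lambda>x. \<bar>g' x\<bar> * f (g x)) absolutely_integrable_on {0<..} \<and>
      integral {0<..} (\<lambda>x. \<bar>g' x\<bar> * f (g x)) = Gamma (q / d)"
    using has_absolute_integral_change_of_variables_1'[of "{0<..}" g g' f "Gamma (q/d)"]
      g_image f_abs f_int by (auto simp: integral_unique)
  then have "((\<lambda>x. \<bar>g' x\<bar> * f (g x)) has_integral Gamma (q / d)) {0<..}"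
    by (metis absolutely_integrable_on_def has_integral_integrable_integral)
  then show ?thesis
    by (rule has_integral_eq[rotated]) (use lam in \<open>simp add: f_def g_def g'_def\<close>)
qed

lemma has_integral_powr_exp_neg_power:
  fixes q lam :: real and d :: nat
  assumes q: "q > 0" and lam: "lam > 0" and d: "d > 0"
  shows "((\<lambda>t. t powr (q - 1) * exp (- lam * t ^ d)) has_integral
           (Gamma (q / d) / (d * lam powr (q / d)))) {0<..}"
proof -
  have "lam * (d * t ^ (d - 1)) * ((lam * t ^ d) powr (q / d - 1) / exp (lam * t ^ d))
      = (d * lam powr (q / d)) * (t powr (q - 1) * exp (- lam * t ^ d))"
    if "t > 0" for t :: real
  proof -
    have e: "(q * real d - real d * real d) / real d = q - d" using d by (simp add: field_simps)
    have "(lam * t ^ d) powr (q / d - 1) = lam powr (q / d - 1) * t powr (q - d)"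
      using that lam d by (simp add: powr_mult powr_realpow[symmetric] powr_powr field_simps e)
    moreover have "t ^ (d - 1) = t powr (real d - 1)"
      using that d by (simp add: powr_realpow[symmetric] of_nat_diff)
    ultimately have "lam * (d * t ^ (d - 1)) * ((lam * t ^ d) powr (q / d - 1) / exp (lam * t ^ d)) =
        d * (lam * lam powr (q / d - 1)) * (t powr (real d - 1) * t powr (q - d)) / exp (lam * t ^ d)"
      by (simp add: field_simps)
    also have "lam * lam powr (q / d - 1) = lam powr (q / d)"
      using lam by (simp add: powr_diff)
    also have "t powr (real d - 1) * t powr (q - d) = t powr (q - 1)"
      using that by (simp add: powr_add[symmetric])
    finally show ?thesis by (simp add: exp_minus field_simps)
  qed
  with has_integral_Gamma_power_substitution[OF assms]
  have "((\<lambda>t. (d * lam powr (q / d)) * (t powr (q - 1) * exp (- lam * t ^ d)))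
      has_integral Gamma (q / d)) {0<..}"
    by (rule has_integral_eq[rotated]) auto
  from has_integral_mult_right[OF this, of "1 / (d * lam powr (q / d))"] lam d
  show ?thesis by simp
qed

definition gamma_moment :: "real \<Rightarrow> nat \<Rightarrow> nat \<Rightarrow> real \<Rightarrow> real" where
  "gamma_moment a d p lam = a * Gamma ((a + p) / d) / (d * lam powr ((a + p) / d))"

lemma gamma_moment_nonneg: "a > 0 \<Longrightarrow> d > 0 \<Longrightarrow> lam > 0 \<Longrightarrow> 0 \<le> gamma_moment a d p lam"
  unfolding gamma_moment_def by (intro divide_nonneg_pos mult_nonneg_nonneg Gamma_real_nonneg) auto

lemma gamma_moment_scale:
  "n > 0 \<Longrightarrow> c > 0 \<Longrightarrow> gamma_moment a d p (n * c) = gamma_moment a d p c * n powr (- ((a + p) / d))"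
  by (simp add: gamma_moment_def powr_mult powr_minus field_simps)

lemma gamma_moment_0:
  assumes "a > 0" "d > 0" "v > 0"
  shows "gamma_moment a d 0 v = Gamma (1 + a / d) * v powr (- a / d)"
proof -
  have "a / d > 0" using assms by simp
  then have "a / d \<notin> \<int>\<^sub>\<le>\<^sub>0" using nonpos_Ints_nonpos[of "a / d"] by auto
  then have "Gamma (1 + a / d) = a / d * Gamma (a / d)"
    using Gamma_plus1[of "a / d"] by (simp add: add.commute)
  then show ?thesis using assms by (simp add: gamma_moment_def powr_minus_divide field_simps)
qed

definition powr_density :: "real \<Rightarrow> real \<Rightarrow> real" where
  "powr_density a t = indicator {0<..} t * (a * t powr (a - 1))"

lemma powr_density_nonneg: "a \<ge> 0 \<Longrightarrow> 0 \<le> powr_density a t"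
  by (simp add: powr_density_def)

lemma borel_measurable_powr_density[measurable]: "powr_density a \<in> borel_measurable borel"
  unfolding powr_density_def by measurable

lemma powr_eq_nn_integral_powr_density:
  assumes a: "a > 0" and D: "D \<ge> 0"
  shows "ennreal (D powr a) = (\<integral>\<^sup>+t. ennreal (powr_density a t * indicator {..<D} t) \<partial>lborel)"
proof -
  have "((\<lambda>x. x powr (a - 1)) has_integral (D powr (a - 1 + 1) / (a - 1 + 1))) {0..D}"
    by (rule has_integral_powr_from_0) (use a D in auto)
  then have "((\<lambda>x. a * x powr (a - 1)) has_integral a * (D powr a / a)) {0..D}"
    by (intro has_integral_mult_right) simp
  then have "((\<lambda>x. a * x powr (a - 1)) has_integral D powr a) {0..D}"
    using a by simp
  from nn_integral_has_integral_lebesgue[OF _ this]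
  have int: "(\<integral>\<^sup>+x. ennreal (indicator {0..D} x * (a * x powr (a - 1))) \<partial>lborel) = ennreal (D powr a)"
    using a by simp
  have "AE x in lborel. x \<noteq> 0" "AE x in lborel. x \<noteq> D"
    by (rule AE_lborel_singleton)+
  then have "AE x in lborel. ennreal (indicator {0..D} x * (a * x powr (a - 1))) =
      ennreal (powr_density a x * indicator {..<D} x)"
    by eventually_elim (auto simp: powr_density_def indicator_def)
  then have "(\<integral>\<^sup>+x. ennreal (indicator {0..D} x * (a * x powr (a - 1))) \<partial>lborel) =
      (\<integral>\<^sup>+t. ennreal (powr_density a t * indicator {..<D} t) \<partial>lborel)"
    by (rule nn_integral_cong_AE)
  with int show ?thesis
    by simp
qed

lemma nn_integral_powr_density_gamma_moment:
  assumes a: "a > 0" and lam: "lam > 0" and d: "d > 0"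
  shows "(\<integral>\<^sup>+t. ennreal (powr_density a t * t ^ p * exp (- lam * t ^ d)) \<partial>lborel)
    = ennreal (gamma_moment a d p lam)"
proof -
  have "(\<integral>\<^sup>+t. ennreal (powr_density a t * t ^ p * exp (- lam * t ^ d)) \<partial>lborel) =
      (\<integral>\<^sup>+t. ennreal a * ennreal (indicator {0<..} t * (t powr (a + p - 1) * exp (- lam * t ^ d))) \<partial>lborel)"
  proof (intro nn_integral_cong)
    fix t :: real
    show "ennreal (powr_density a t * t ^ p * exp (- lam * t ^ d)) =
        ennreal a * ennreal (indicator {0<..} t * (t powr (a + p - 1) * exp (- lam * t ^ d)))"
    proof (cases "t > 0")
      case True
      then have "t powr (a - 1) * t ^ p = t powr (a + p - 1)"
        by (simp add: powr_realpow[symmetric] powr_add[symmetric] algebra_simps)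
      then have "powr_density a t * t ^ p * exp (- lam * t ^ d) =
          a * (indicator {0<..} t * (t powr (a + p - 1) * exp (- lam * t ^ d)))"
        using True by (simp add: powr_density_def algebra_simps)
      then show ?thesis using a True by (simp add: ennreal_mult mult.assoc)
    qed (simp add: powr_density_def)
  qed
  also have "\<dots> = ennreal a * ennreal (Gamma ((a + p) / d) / (d * lam powr ((a + p) / d)))"
    using nn_integral_has_integral_lebesgue[OF _ has_integral_powr_exp_neg_power[OF _ lam d]] a
    by (subst nn_integral_cmult) auto
  also have "\<dots> = ennreal (gamma_moment a d p lam)"
    using a d lam
    by (simp add: gamma_moment_def ennreal_mult[symmetric] divide_nonneg_pos Gamma_real_nonneg)
  finally show ?thesis .
qed

lemma has_bochner_integral_powr_density_exp:
  assumes a: "a > 0" and lam: "lam > 0" and d: "d > 0"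
  shows "has_bochner_integral lborel (\<lambda>t. powr_density a t * exp (- lam * t ^ d)) (gamma_moment a d 0 lam)"
  using nn_integral_powr_density_gamma_moment[OF assms, where p=0] gamma_moment_nonneg[OF a d lam]
  by (intro has_bochner_integral_nn_integral) (auto simp: powr_density_nonneg a less_imp_le)

lemma nn_integral_lborel_product:
  fixes f g :: "real \<Rightarrow> ennreal"
  assumes [measurable]: "f \<in> borel_measurable borel" "g \<in> borel_measurable borel"
  shows "(\<integral>\<^sup>+t. \<integral>\<^sup>+s. f t * g s \<partial>lborel \<partial>lborel) = (\<integral>\<^sup>+t. f t \<partial>lborel) * (\<integral>\<^sup>+s. g s \<partial>lborel)"
proof -
  have "(\<integral>\<^sup>+t. \<integral>\<^sup>+s. f t * g s \<partial>lborel \<partial>lborel) = (\<integral>\<^sup>+t. f t * (\<integral>\<^sup>+s. g s \<partial>lborel) \<partial>lborel)"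
    by (intro nn_integral_cong nn_integral_cmult) simp
  also have "\<dots> = (\<integral>\<^sup>+t. f t \<partial>lborel) * (\<integral>\<^sup>+s. g s \<partial>lborel)"
    by (rule nn_integral_multc) simp
  finally show ?thesis .
qed

lemma nn_integral_lborel_product_add:
  fixes f g :: "real \<Rightarrow> ennreal" and h :: "real \<Rightarrow> real \<Rightarrow> ennreal"
  assumes [measurable]: "f \<in> borel_measurable borel" "g \<in> borel_measurable borel"
    "case_prod h \<in> borel_measurable (borel \<Otimes>\<^sub>M lborel)"
  shows "(\<integral>\<^sup>+t. \<integral>\<^sup>+s. f t * g s + c * h t s \<partial>lborel \<partial>lborel)
    = (\<integral>\<^sup>+t. f t \<partial>lborel) * (\<integral>\<^sup>+s. g s \<partial>lborel) + c * (\<integral>\<^sup>+t. \<integral>\<^sup>+s. h t s \<partial>lborel \<partial>lborel)"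
proof -
  have "(\<integral>\<^sup>+t. \<integral>\<^sup>+s. f t * g s + c * h t s \<partial>lborel \<partial>lborel)
      = (\<integral>\<^sup>+t. (\<integral>\<^sup>+s. f t * g s \<partial>lborel) + c * (\<integral>\<^sup>+s. h t s \<partial>lborel) \<partial>lborel)"
    by (intro nn_integral_cong) (simp add: nn_integral_add nn_integral_cmult)
  also have "\<dots> = (\<integral>\<^sup>+t. \<integral>\<^sup>+s. f t * g s \<partial>lborel \<partial>lborel) + c * (\<integral>\<^sup>+t. \<integral>\<^sup>+s. h t s \<partial>lborel \<partial>lborel)"
    by (simp add: nn_integral_add nn_integral_cmult)
  finally show ?thesis
    by (simp add: nn_integral_lborel_product)
qed

lemma nn_integral_overlap_le:
  fixes a l1 l2 :: real and D :: nat
  assumes a: "a > 0" and l1: "l1 > 0" and l2: "l2 > 0" and D: "D > 0"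
  shows "(\<integral>\<^sup>+t. \<integral>\<^sup>+s. ennreal (powr_density a t * powr_density a s * exp (- l1 * t ^ D) * exp (- l2 * s ^ D)
      * (t + s) ^ D) \<partial>lborel \<partial>lborel)
    \<le> ennreal (2 ^ D * (gamma_moment a D D l1 * gamma_moment a D 0 l2 + gamma_moment a D 0 l1 * gamma_moment a D D l2))"
proof -
  define F where "F = (\<lambda>p t. powr_density a t * t ^ p * exp (- l1 * t ^ D))"
  define G where "G = (\<lambda>p t. powr_density a t * t ^ p * exp (- l2 * t ^ D))"
  have [measurable]: "F p \<in> borel_measurable borel" "G p \<in> borel_measurable borel" for p
    unfolding F_def G_def by measurable
  have F0: "0 \<le> F p t" and G0: "0 \<le> G p t" for p t
    unfolding F_def G_def using a by (cases "t > 0"; simp add: powr_density_def)+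
  have "(\<integral>\<^sup>+t. \<integral>\<^sup>+s. ennreal (powr_density a t * powr_density a s * exp (- l1 * t ^ D) * exp (- l2 * s ^ D)
      * (t + s) ^ D) \<partial>lborel \<partial>lborel)
    \<le> (\<integral>\<^sup>+t. \<integral>\<^sup>+s. ennreal (2 ^ D) * (ennreal (F D t) * ennreal (G 0 s) + ennreal (F 0 t) * ennreal (G D s))
      \<partial>lborel \<partial>lborel)"
  proof (intro nn_integral_mono)
    fix t s :: real
    show "ennreal (powr_density a t * powr_density a s * exp (- l1 * t ^ D) * exp (- l2 * s ^ D) * (t + s) ^ D)
      \<le> ennreal (2 ^ D) * (ennreal (F D t) * ennreal (G 0 s) + ennreal (F 0 t) * ennreal (G D s))"
    proof (cases "t > 0 \<and> s > 0")
      case True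
      have "powr_density a t * powr_density a s * exp (- l1 * t ^ D) * exp (- l2 * s ^ D) * (t + s) ^ D
          \<le> powr_density a t * powr_density a s * exp (- l1 * t ^ D) * exp (- l2 * s ^ D) * (2 ^ D * (t ^ D + s ^ D))"
        using True a by (intro mult_left_mono add_power_le_two_power) (auto intro!: mult_nonneg_nonneg powr_density_nonneg)
      also have "\<dots> = 2 ^ D * (F D t * G 0 s + F 0 t * G D s)"
        by (simp add: F_def G_def algebra_simps)
      finally have "ennreal (powr_density a t * powr_density a s * exp (- l1 * t ^ D) * exp (- l2 * s ^ D) * (t + s) ^ D)
          \<le> ennreal (2 ^ D * (F D t * G 0 s + F 0 t * G D s))"
        by (rule ennreal_leI)
      also have "\<dots> = ennreal (2 ^ D) * (ennreal (F D t) * ennreal (G 0 s) + ennreal (F 0 t) * ennreal (G D s))"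
        using F0 G0 by (simp add: ennreal_mult ennreal_plus)
      finally show ?thesis .
    qed (auto simp: powr_density_def)
  qed
  also have "\<dots> = ennreal (2 ^ D) * ((\<integral>\<^sup>+t. ennreal (F D t) \<partial>lborel) * (\<integral>\<^sup>+s. ennreal (G 0 s) \<partial>lborel)
      + (\<integral>\<^sup>+t. ennreal (F 0 t) \<partial>lborel) * (\<integral>\<^sup>+s. ennreal (G D s) \<partial>lborel))"
    by (simp add: nn_integral_cmult nn_integral_add nn_integral_multc)
  also have "\<dots> = ennreal (2 ^ D * (gamma_moment a D D l1 * gamma_moment a D 0 l2
      + gamma_moment a D 0 l1 * gamma_moment a D D l2))"
    using gamma_moment_nonneg[OF a D l1] gamma_moment_nonneg[OF a D l2]
    unfolding F_def G_def nn_integral_powr_density_gamma_moment[OF a l1 D] nn_integral_powr_density_gamma_moment[OF a l2 D]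
    by (simp add: ennreal_mult ennreal_plus)
  finally show ?thesis .
qed

lemma gamma_moment_cross_le:
  fixes a c :: real and D i k :: nat
  assumes a: "a > 0" and D: "D > 0" and ik: "1 \<le> i" "i \<le> k" and c: "c > 0"
  shows "gamma_moment a D D (i * c) * gamma_moment a D 0 (k * c) + gamma_moment a D 0 (i * c) * gamma_moment a D D (k * c)
    \<le> 2 * gamma_moment a D D c * gamma_moment a D 0 c * (real i powr (- 1 - a / D) * real k powr (- (a / D)))"
proof -
  define G0 where "G0 = gamma_moment a D 0 c"
  define GD where "GD = gamma_moment a D D c"
  have G: "0 \<le> G0" "0 \<le> GD"
    unfolding G0_def GD_def using a D c by (auto intro: gamma_moment_nonneg)
  have exps: "- ((a + real D) / D) = - 1 - a / D" "- ((a + real 0) / D) = - (a / D)"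
    using D by (simp_all add: field_simps)
  have scale: "gamma_moment a D p (real n * c) = gamma_moment a D p c * real n powr (- ((a + p) / D))"
    if "n \<ge> 1" for n p
    using that c by (intro gamma_moment_scale) auto
  have "- 1 - a / D = - (a / D) + (- 1)"
    by simp
  then have "real i powr (- 1 - a / D) = real i powr (- (a / D)) * real i powr (- 1)"
    and "real k powr (- 1 - a / D) = real k powr (- (a / D)) * real k powr (- 1)"
    by (simp_all only: powr_add)
  moreover have "real k powr (- 1) \<le> real i powr (- 1)"
    using ik by (intro powr_mono2') auto
  then have "real i powr (- (a / D)) * (real k powr (- (a / D)) * real k powr (- 1))
      \<le> real i powr (- (a / D)) * (real k powr (- (a / D)) * real i powr (- 1))"
    by (intro mult_left_mono) auto
  ultimately have "real i powr (- (a / D)) * real k powr (- 1 - a / D) \<le> real i powr (- 1 - a / D) * real k powr (- (a / D))"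
    by (simp add: mult_ac)
  then have "real i powr (- 1 - a / D) * real k powr (- (a / D)) + real i powr (- (a / D)) * real k powr (- 1 - a / D)
      \<le> 2 * (real i powr (- 1 - a / D) * real k powr (- (a / D)))"
    by linarith
  then have "GD * G0 * (real i powr (- 1 - a / D) * real k powr (- (a / D)) + real i powr (- (a / D)) * real k powr (- 1 - a / D))
      \<le> GD * G0 * (2 * (real i powr (- 1 - a / D) * real k powr (- (a / D))))"
    using G by (intro mult_left_mono) auto
  then show ?thesis
    using ik unfolding scale[OF ik(1)] scale[of k, OF order_trans[OF ik]] G0_def[symmetric] GD_def[symmetric] exps
    by (simp add: algebra_simps)
qed

definition cross_const :: "real \<Rightarrow> nat \<Rightarrow> real" where
  "cross_const a D = 2 * unit_ball_vol D * 2 ^ D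
    * gamma_moment a D D (1 / (2 * D ^ D)) * gamma_moment a D 0 (1 / (2 * D ^ D))"

lemma cross_const_nonneg: "a > 0 \<Longrightarrow> D > 0 \<Longrightarrow> 0 \<le> cross_const a D"
  unfolding cross_const_def by (intro mult_nonneg_nonneg gamma_moment_nonneg) auto

lemma nn_integral_overlap_le_cross_const:
  fixes a :: real and D i k :: nat
  assumes a: "a > 0" and D: "D > 0" and ik: "1 \<le> i" "i \<le> k"
  shows "ennreal (unit_ball_vol D) * (\<integral>\<^sup>+t. \<integral>\<^sup>+s. ennreal (powr_density a t * powr_density a s
      * (exp (- (i * (t / D) ^ D) / 2) * exp (- (k * (s / D) ^ D) / 2)) * (t + s) ^ D) \<partial>lborel \<partial>lborel)
    \<le> ennreal (cross_const a D * (real i powr (- 1 - a / D) * real k powr (- (a / D))))"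
proof -
  define c :: real where "c = 1 / (2 * D ^ D)"
  have c: "c > 0" using D by (simp add: c_def)
  have "powr_density a t * powr_density a s * (exp (- (i * (t / D) ^ D) / 2) * exp (- (k * (s / D) ^ D) / 2))
      * (t + s) ^ D
    = powr_density a t * powr_density a s * exp (- (i * c) * t ^ D) * exp (- (k * c) * s ^ D) * (t + s) ^ D"
    for t s
    by (simp add: c_def power_divide mult.commute)
  then have "ennreal (unit_ball_vol D) * (\<integral>\<^sup>+t. \<integral>\<^sup>+s. ennreal (powr_density a t * powr_density a s
      * (exp (- (i * (t / D) ^ D) / 2) * exp (- (k * (s / D) ^ D) / 2)) * (t + s) ^ D) \<partial>lborel \<partial>lborel)
    \<le> ennreal (unit_ball_vol D) * ennreal (2 ^ D * (gamma_moment a D D (i * c) * gamma_moment a D 0 (k * c)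
        + gamma_moment a D 0 (i * c) * gamma_moment a D D (k * c)))"
    using ik c D a by (intro mult_left_mono) (simp only:, intro nn_integral_overlap_le, auto)
  also have "\<dots> = ennreal (unit_ball_vol D * (2 ^ D * (gamma_moment a D D (i * c) * gamma_moment a D 0 (k * c)
        + gamma_moment a D 0 (i * c) * gamma_moment a D D (k * c))))"
    by (simp add: ennreal_mult')
  also have "\<dots> \<le> ennreal (unit_ball_vol D * (2 ^ D * (2 * gamma_moment a D D c * gamma_moment a D 0 c
        * (real i powr (- 1 - a / D) * real k powr (- (a / D))))))"
    using ik a D c by (intro ennreal_leI mult_left_mono gamma_moment_cross_le) auto
  also have "\<dots> = ennreal (cross_const a D * (real i powr (- 1 - a / D) * real k powr (- (a / D))))"
    by (simp add: cross_const_def c_def mult_ac)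
  finally show ?thesis .
qed

section \<open>Sums of powers\<close>

lemma powr_neg_pred_le:
  fixes b :: real
  assumes N: "N \<ge> 1" and b: "b \<ge> 0"
  shows "real (N - 1) powr (- b) \<le> 2 powr b * real N powr (- b)"
proof (cases "N = 1")
  case False
  then have "real N / 2 \<le> real (N - 1)" using N by (simp add: of_nat_diff field_simps)
  then have "real (N - 1) powr (- b) \<le> (real N / 2) powr (- b)"
    using N b by (intro powr_mono2') auto
  also have "\<dots> = 2 powr b * real N powr (- b)"
    by (simp add: powr_divide powr_minus_divide field_simps)
  finally show ?thesis .
qed simp

lemma powr_neg_le_diff:
  fixes b :: real and k :: nat
  assumes b: "0 < b" "b < 1" and k: "k \<ge> 1"
  shows "real k powr (- b) \<le> (real k powr (1 - b) - real (k - 1) powr (1 - b)) / (1 - b)"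
proof (cases "k = 1")
  case True then show ?thesis using b by (simp add: field_simps)
next
  case False
  then have k2: "k \<ge> 2" using k by simp
  have der: "DERIV (\<lambda>x. x powr (1 - b)) x :> (1 - b) * x powr (1 - b - 1)" if "real (k - 1) \<le> x" for x
    using that k2 by (intro has_real_derivative_powr) (auto simp: of_nat_diff)
  have lt: "real (k - 1) < real k" using k2 by simp
  have "\<exists>z. real (k - 1) < z \<and> z < real k \<and>
    real k powr (1 - b) - real (k - 1) powr (1 - b) = (real k - real (k - 1)) * ((1 - b) * z powr (1 - b - 1))"
    by (rule MVT2[OF lt]) (rule der, simp)
  then obtain z where z: "real (k - 1) < z" "z < real k"
    "real k powr (1 - b) - real (k - 1) powr (1 - b) = (real k - real (k - 1)) * ((1 - b) * z powr (1 - b - 1))"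
    by blast
  have zpos: "z > 0" using z(1) k2 by (smt (verit) of_nat_0_le_iff)
  have "real k powr (- b) \<le> z powr (- b)"
    using zpos z(2) b by (intro powr_mono2') auto
  then have "(1 - b) * real k powr (- b) \<le> (1 - b) * z powr (- b)" using b by (intro mult_left_mono) auto
  moreover have "real k - real (k - 1) = 1" using k2 by (simp add: of_nat_diff)
  ultimately have "(1 - b) * real k powr (- b) \<le> real k powr (1 - b) - real (k - 1) powr (1 - b)"
    using z(3) by simp
  then show ?thesis using b by (simp add: le_divide_eq mult.commute)
qed

lemma diff_le_powr_neg:
  fixes b :: real and k :: nat
  assumes b: "0 < b" "b < 1" and k: "k \<ge> 1"
  shows "(real (k + 1) powr (1 - b) - real k powr (1 - b)) / (1 - b) \<le> real k powr (- b)"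
proof -
  have der: "DERIV (\<lambda>x. x powr (1 - b)) x :> (1 - b) * x powr (1 - b - 1)" if "real k \<le> x" for x
    using that k by (intro has_real_derivative_powr) auto
  have lt: "real k < real (k + 1)" by simp
  have "\<exists>z. real k < z \<and> z < real (k + 1) \<and>
    real (k + 1) powr (1 - b) - real k powr (1 - b) = (real (k + 1) - real k) * ((1 - b) * z powr (1 - b - 1))"
    by (rule MVT2[OF lt]) (rule der, simp)
  then obtain z where z: "real k < z" "z < real (k + 1)"
    "real (k + 1) powr (1 - b) - real k powr (1 - b) = (real (k + 1) - real k) * ((1 - b) * z powr (1 - b - 1))"
    by blast
  have "z powr (- b) \<le> real k powr (- b)"
    using z(1) b k by (intro powr_mono2') auto
  then have "(1 - b) * z powr (- b) \<le> (1 - b) * real k powr (- b)" using b by (intro mult_left_mono) auto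
  then have "real (k + 1) powr (1 - b) - real k powr (1 - b) \<le> (1 - b) * real k powr (- b)"
    using z(3) by simp
  then show ?thesis using b by (simp add: divide_le_eq mult.commute)
qed

lemma sum_powr_neg_le:
  fixes b :: real assumes b: "0 < b" "b < 1"
  shows "(\<Sum>k=1..n. real k powr (- b)) \<le> real n powr (1 - b) / (1 - b)"
proof (induction n)
  case (Suc n)
  have "(\<Sum>k=1..Suc n. real k powr (- b)) = (\<Sum>k=1..n. real k powr (- b)) + real (Suc n) powr (- b)"
    by simp
  also have "\<dots> \<le> real n powr (1 - b) / (1 - b) + (real (Suc n) powr (1 - b) - real n powr (1 - b)) / (1 - b)"
    using Suc.IH powr_neg_le_diff[OF b, of "Suc n"] by simp
  also have "\<dots> = real (Suc n) powr (1 - b) / (1 - b)"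
    by (simp add: diff_divide_distrib)
  finally show ?case .
qed simp

lemma sum_powr_neg_ge:
  fixes b :: real assumes b: "0 < b" "b < 1"
  shows "(real (Suc n) powr (1 - b) - 1) / (1 - b) \<le> (\<Sum>k=1..n. real k powr (- b))"
proof (induction n)
  case (Suc n)
  have "(real (Suc (Suc n)) powr (1 - b) - 1) / (1 - b) =
      (real (Suc n) powr (1 - b) - 1) / (1 - b) + (real (Suc n + 1) powr (1 - b) - real (Suc n) powr (1 - b)) / (1 - b)"
    by (simp add: diff_divide_distrib)
  also have "\<dots> \<le> (\<Sum>k=1..n. real k powr (- b)) + real (Suc n) powr (- b)"
    using Suc.IH diff_le_powr_neg[OF b, of "Suc n"] by simp
  also have "\<dots> = (\<Sum>k=1..Suc n. real k powr (- b))"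
    by simp
  finally show ?case .
qed simp

lemma sum_powr_neg_rescaled_le:
  fixes b :: real assumes b: "0 < b" "b < 1" and n: "n \<ge> 1"
  shows "real n powr (b - 1) * (\<Sum>k\<in>{1..<n}. real k powr (- b)) \<le> 1 / (1 - b)"
proof -
  have "(\<Sum>k\<in>{1..<n}. real k powr (- b)) \<le> (\<Sum>k=1..n. real k powr (- b))"
    by (intro sum_mono2) auto
  also have "\<dots> \<le> real n powr (1 - b) / (1 - b)"
    by (rule sum_powr_neg_le[OF b])
  finally have "real n powr (b - 1) * (\<Sum>k\<in>{1..<n}. real k powr (- b))
      \<le> real n powr (b - 1) * (real n powr (1 - b) / (1 - b))"
    by (intro mult_left_mono) auto
  also have "\<dots> = 1 / (1 - b)"
    using n b by (simp add: field_simps powr_add[symmetric])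
  finally show ?thesis .
qed

lemma sum_powr_neg_asymptotics:
  fixes b :: real assumes b: "0 < b" "b < 1"
  shows "(\<lambda>n. real n powr (b - 1) * (\<Sum>k\<in>{1..<n}. real k powr (- b))) \<longlonglongrightarrow> 1 / (1 - b)"
proof (rule tendsto_sandwich[where f="\<lambda>n. (1 - real n powr (b - 1)) / (1 - b)" and h="\<lambda>n. 1 / (1 - b)"])
  show "\<forall>\<^sub>F n in sequentially. (1 - real n powr (b - 1)) / (1 - b)
      \<le> real n powr (b - 1) * (\<Sum>k\<in>{1..<n}. real k powr (- b))"
  proof (rule eventually_sequentiallyI[of 1])
    fix n :: nat assume n: "n \<ge> 1"
    have "{1..<n} = {1..n - 1}" and "Suc (n - 1) = n"
      using n by auto
    then have "(real n powr (1 - b) - 1) / (1 - b) \<le> (\<Sum>k\<in>{1..<n}. real k powr (- b))"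
      using sum_powr_neg_ge[OF b, of "n - 1"] by simp
    then have le: "real n powr (b - 1) * ((real n powr (1 - b) - 1) / (1 - b))
        \<le> real n powr (b - 1) * (\<Sum>k\<in>{1..<n}. real k powr (- b))"
      by (intro mult_left_mono) auto
    have eq: "(1 - real n powr (b - 1)) / (1 - b) = real n powr (b - 1) * ((real n powr (1 - b) - 1) / (1 - b))"
      using n b by (simp add: field_simps powr_add[symmetric])
    show "(1 - real n powr (b - 1)) / (1 - b) \<le> real n powr (b - 1) * (\<Sum>k\<in>{1..<n}. real k powr (- b))"
      unfolding eq by (rule le)
  qed
  show "\<forall>\<^sub>F n in sequentially. real n powr (b - 1) * (\<Sum>k\<in>{1..<n}. real k powr (- b)) \<le> 1 / (1 - b)"
    using sum_powr_neg_rescaled_le[OF b] by (intro eventually_sequentiallyI[of 1])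
  have "(\<lambda>n. real n powr (b - 1)) \<longlonglongrightarrow> 0"
    using b by (intro tendsto_neg_powr filterlim_real_sequentially) auto
  then have "(\<lambda>n. (1 - real n powr (b - 1)) / (1 - b)) \<longlonglongrightarrow> (1 - 0) / (1 - b)"
    by (intro tendsto_divide tendsto_diff tendsto_const) (use b in auto)
  then show "(\<lambda>n. (1 - real n powr (b - 1)) / (1 - b)) \<longlonglongrightarrow> 1 / (1 - b)"
    by simp
qed auto

lemma sum_powr_neg_mult_le:
  fixes b r :: real and e :: "nat \<Rightarrow> real"
  assumes "\<And>k. k \<ge> N \<Longrightarrow> \<bar>e k\<bar> \<le> r"
  shows "\<bar>\<Sum>k\<in>{1..<n}. real k powr (- b) * e k\<bar>
    \<le> (\<Sum>k\<in>{1..<N}. real k powr (- b) * \<bar>e k\<bar>) + r * (\<Sum>k\<in>{1..<n}. real k powr (- b))"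
proof -
  have r: "0 \<le> r" using assms[of N] by simp
  have "\<bar>\<Sum>k\<in>{1..<n}. real k powr (- b) * e k\<bar> \<le> (\<Sum>k\<in>{1..<n}. real k powr (- b) * \<bar>e k\<bar>)"
    by (rule order_trans[OF sum_abs]) (simp add: abs_mult)
  also have "\<dots> \<le> (\<Sum>k\<in>{1..<N}. real k powr (- b) * \<bar>e k\<bar>) + (\<Sum>k\<in>{1..<n}. r * real k powr (- b))"
  proof -
    have "(\<Sum>k\<in>{1..<n}. real k powr (- b) * \<bar>e k\<bar>) \<le>
        (\<Sum>k\<in>{1..<n}. real k powr (- b) * \<bar>e k\<bar> * of_bool (k < N) + r * real k powr (- b))"
      using assms r by (intro sum_mono) (auto simp: not_less)
    also have "\<dots> \<le> (\<Sum>k\<in>{1..<N}. real k powr (- b) * \<bar>e k\<bar>) + (\<Sum>k\<in>{1..<n}. r * real k powr (- b))"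
      by (simp add: sum.distrib sum.If_cases Int_def) (intro sum_mono2; auto)
    finally show ?thesis .
  qed
  finally show ?thesis
    by (simp add: sum_distrib_left)
qed

lemma weighted_cesaro_null:
  fixes b :: real and e :: "nat \<Rightarrow> real"
  assumes b: "0 < b" "b < 1" and e: "e \<longlonglongrightarrow> 0"
  shows "(\<lambda>n. real n powr (b - 1) * (\<Sum>k\<in>{1..<n}. real k powr (- b) * e k)) \<longlonglongrightarrow> 0"
proof (rule LIMSEQ_I)
  fix r :: real assume r: "r > 0"
  define r' where "r' = r * (1 - b) / 2"
  have r': "r' > 0" using r b by (simp add: r'_def)
  obtain N where N: "\<And>k. k \<ge> N \<Longrightarrow> \<bar>e k\<bar> \<le> r'"
    using LIMSEQ_D[OF e r'] by (metis diff_zero less_imp_le real_norm_def)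
  define C where "C = (\<Sum>k\<in>{1..<N}. real k powr (- b) * \<bar>e k\<bar>)"
  have "(\<lambda>n. real n powr (b - 1) * C) \<longlonglongrightarrow> 0 * C"
    using b by (intro tendsto_mult tendsto_const tendsto_neg_powr filterlim_real_sequentially) auto
  then obtain N' where N': "\<And>n. n \<ge> N' \<Longrightarrow> real n powr (b - 1) * C < r / 2"
    using LIMSEQ_D[of _ 0 "r / 2"] r by fastforce
  show "\<exists>n0. \<forall>n\<ge>n0. norm (real n powr (b - 1) * (\<Sum>k\<in>{1..<n}. real k powr (- b) * e k) - 0) < r"
  proof (intro exI allI impI)
    fix n assume n: "n \<ge> max 1 N'"
    have "\<bar>real n powr (b - 1) * (\<Sum>k\<in>{1..<n}. real k powr (- b) * e k)\<bar>
        = real n powr (b - 1) * \<bar>\<Sum>k\<in>{1..<n}. real k powr (- b) * e k\<bar>"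
      by (simp add: abs_mult)
    also have "\<dots> \<le> real n powr (b - 1) * (C + r' * (\<Sum>k\<in>{1..<n}. real k powr (- b)))"
      unfolding C_def by (intro mult_left_mono sum_powr_neg_mult_le N) auto
    also have "\<dots> = real n powr (b - 1) * C + r' * (real n powr (b - 1) * (\<Sum>k\<in>{1..<n}. real k powr (- b)))"
      by (simp add: algebra_simps)
    also have "\<dots> < r / 2 + r' * (1 / (1 - b))"
      using N'[of n] n r' sum_powr_neg_rescaled_le[OF b, of n]
      by (intro add_less_le_mono mult_left_mono) auto
    also have "\<dots> = r"
      using b by (simp add: r'_def field_simps)
    finally show "norm (real n powr (b - 1) * (\<Sum>k\<in>{1..<n}. real k powr (- b) * e k) - 0) < r"
      by simp
  qed
qed

lemma weighted_cesaro_tendsto: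
  fixes b L :: real and m :: "nat \<Rightarrow> real"
  assumes b: "0 < b" "b < 1" and lim: "(\<lambda>k. real k powr b * m k) \<longlonglongrightarrow> L"
  shows "(\<lambda>n. real n powr (b - 1) * (\<Sum>k\<in>{1..<n}. m k)) \<longlonglongrightarrow> L / (1 - b)"
proof -
  define e where "e = (\<lambda>k. real k powr b * m k - L)"
  have e: "e \<longlonglongrightarrow> 0" unfolding e_def using tendsto_diff[OF lim tendsto_const[of L]] by simp
  have dec: "real n powr (b - 1) * (\<Sum>k\<in>{1..<n}. m k) =
      L * (real n powr (b - 1) * (\<Sum>k\<in>{1..<n}. real k powr (- b))) +
      real n powr (b - 1) * (\<Sum>k\<in>{1..<n}. real k powr (- b) * e k)" for n
  proof -
    have "m k = L * real k powr (- b) + real k powr (- b) * e k" if "k \<in> {1..<n}" for k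
    proof -
      have "real k powr (- b) * real k powr b = 1" using that by (simp add: powr_add[symmetric])
      then show ?thesis unfolding e_def by (simp add: algebra_simps)
    qed
    then have "(\<Sum>k\<in>{1..<n}. m k) = L * (\<Sum>k\<in>{1..<n}. real k powr (- b)) + (\<Sum>k\<in>{1..<n}. real k powr (- b) * e k)"
      by (simp add: sum.distrib sum_distrib_left)
    then show ?thesis by (simp add: algebra_simps)
  qed
  have "(\<lambda>n. L * (real n powr (b - 1) * (\<Sum>k\<in>{1..<n}. real k powr (- b))) +
      real n powr (b - 1) * (\<Sum>k\<in>{1..<n}. real k powr (- b) * e k)) \<longlonglongrightarrow> L * (1 / (1 - b)) + 0"
    by (intro tendsto_add tendsto_mult tendsto_const sum_powr_neg_asymptotics[OF b] weighted_cesaro_null[OF b e])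
  then show ?thesis unfolding dec by simp
qed

section \<open>Moments from tail probabilities\<close>

lemma nn_integral_powr_eq_tail:
  fixes X :: "'b \<Rightarrow> real"
  assumes "sigma_finite_measure N" and [measurable]: "X \<in> borel_measurable N"
    and nonneg: "\<And>x. x \<in> space N \<Longrightarrow> 0 \<le> X x" and a: "a > 0"
  shows "(\<integral>\<^sup>+x. ennreal (X x powr a) \<partial>N)
    = (\<integral>\<^sup>+t. ennreal (powr_density a t) * emeasure N {x \<in> space N. t < X x} \<partial>lborel)"
proof -
  interpret N: sigma_finite_measure N by fact
  interpret pair_sigma_finite lborel N
    by (intro pair_sigma_finite.intro sigma_finite_lborel N.sigma_finite_measure_axioms)
  define g where "g = (\<lambda>x t. ennreal (powr_density a t * (if t < X x then 1 else 0)))"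
  have "(\<integral>\<^sup>+x. ennreal (X x powr a) \<partial>N) = (\<integral>\<^sup>+x. \<integral>\<^sup>+t. g x t \<partial>lborel \<partial>N)"
    using nonneg a unfolding g_def
    by (intro nn_integral_cong) (simp add: powr_eq_nn_integral_powr_density indicator_def of_bool_def)
  also have "\<dots> = (\<integral>\<^sup>+t. \<integral>\<^sup>+x. g x t \<partial>N \<partial>lborel)"
    by (rule Fubini') (simp add: g_def)
  also have "\<dots> = (\<integral>\<^sup>+t. ennreal (powr_density a t) * emeasure N {x \<in> space N. t < X x} \<partial>lborel)"
  proof (intro nn_integral_cong)
    fix t
    have "(\<integral>\<^sup>+x. g x t \<partial>N) = (\<integral>\<^sup>+x. ennreal (powr_density a t) * indicator {x \<in> space N. t < X x} x \<partial>N)"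
      by (intro nn_integral_cong) (simp add: g_def indicator_def)
    also have "\<dots> = ennreal (powr_density a t) * emeasure N {x \<in> space N. t < X x}"
      by (rule nn_integral_cmult_indicator) measurable
    finally show "(\<integral>\<^sup>+x. g x t \<partial>N) = ennreal (powr_density a t) * emeasure N {x \<in> space N. t < X x}" .
  qed
  finally show ?thesis .
qed

lemma nn_integral_powr_mult_eq_joint_tail:
  fixes X Y :: "'b \<Rightarrow> real"
  assumes "sigma_finite_measure N" and [measurable]: "X \<in> borel_measurable N" "Y \<in> borel_measurable N"
    and nonneg: "\<And>x. x \<in> space N \<Longrightarrow> 0 \<le> X x" "\<And>x. x \<in> space N \<Longrightarrow> 0 \<le> Y x"
    and a: "a > 0" and b: "b > 0"
  shows "(\<integral>\<^sup>+x. ennreal (X x powr a * Y x powr b) \<partial>N)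
    = (\<integral>\<^sup>+t. \<integral>\<^sup>+s. ennreal (powr_density a t) * ennreal (powr_density b s)
        * emeasure N {x \<in> space N. t < X x \<and> s < Y x} \<partial>lborel \<partial>lborel)"
proof -
  interpret N: sigma_finite_measure N by fact
  interpret pair_sigma_finite lborel N
    by (intro pair_sigma_finite.intro sigma_finite_lborel N.sigma_finite_measure_axioms)
  define f where "f = (\<lambda>x t. ennreal (powr_density a t * (if t < X x then 1 else 0)))"
  define g where "g = (\<lambda>x s. ennreal (powr_density b s * (if s < Y x then 1 else 0)))"
  have "(\<integral>\<^sup>+x. ennreal (X x powr a * Y x powr b) \<partial>N)
      = (\<integral>\<^sup>+x. (\<integral>\<^sup>+t. f x t \<partial>lborel) * (\<integral>\<^sup>+s. g x s \<partial>lborel) \<partial>N)"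
    using nonneg a b unfolding f_def g_def
    by (intro nn_integral_cong) (simp add: ennreal_mult powr_eq_nn_integral_powr_density indicator_def of_bool_def)
  also have "\<dots> = (\<integral>\<^sup>+x. \<integral>\<^sup>+t. \<integral>\<^sup>+s. f x t * g x s \<partial>lborel \<partial>lborel \<partial>N)"
    by (simp add: f_def g_def nn_integral_multc nn_integral_cmult)
  also have "\<dots> = (\<integral>\<^sup>+t. \<integral>\<^sup>+x. \<integral>\<^sup>+s. f x t * g x s \<partial>lborel \<partial>N \<partial>lborel)"
  proof (rule Fubini')
    have "(\<lambda>(p, s). f (snd p) (fst p) * g (snd p) s) \<in> borel_measurable ((lborel \<Otimes>\<^sub>M N) \<Otimes>\<^sub>M lborel)"
      unfolding f_def g_def by measurable
    then show "(\<lambda>(t, x). \<integral>\<^sup>+s. f x t * g x s \<partial>lborel) \<in> borel_measurable (lborel \<Otimes>\<^sub>M N)"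
      by (simp add: case_prod_beta' lborel.borel_measurable_nn_integral)
  qed
  also have "\<dots> = (\<integral>\<^sup>+t. \<integral>\<^sup>+s. \<integral>\<^sup>+x. f x t * g x s \<partial>N \<partial>lborel \<partial>lborel)"
    by (intro nn_integral_cong Fubini') (simp add: f_def g_def)
  also have "\<dots> = (\<integral>\<^sup>+t. \<integral>\<^sup>+s. ennreal (powr_density a t) * ennreal (powr_density b s)
      * emeasure N {x \<in> space N. t < X x \<and> s < Y x} \<partial>lborel \<partial>lborel)"
  proof (intro nn_integral_cong)
    fix t s
    have "(\<integral>\<^sup>+x. f x t * g x s \<partial>N) = (\<integral>\<^sup>+x. (ennreal (powr_density a t) * ennreal (powr_density b s))
        * indicator {x \<in> space N. t < X x \<and> s < Y x} x \<partial>N)"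
      using a b by (intro nn_integral_cong) (simp add: f_def g_def indicator_def ennreal_mult powr_density_nonneg)
    also have "\<dots> = ennreal (powr_density a t) * ennreal (powr_density b s) * emeasure N {x \<in> space N. t < X x \<and> s < Y x}"
      by (rule nn_integral_cmult_indicator) measurable
    finally show "(\<integral>\<^sup>+x. f x t * g x s \<partial>N) = ennreal (powr_density a t) * ennreal (powr_density b s)
        * emeasure N {x \<in> space N. t < X x \<and> s < Y x}" .
  qed
  finally show ?thesis .
qed

lemma (in prob_space) expectation_abs_le_sqrt:
  fixes f :: "'a \<Rightarrow> real"
  assumes "integrable M f" "integrable M (\<lambda>x. f x ^ 2)"
  shows "expectation (\<lambda>x. \<bar>f x\<bar>) \<le> sqrt (expectation (\<lambda>x. f x ^ 2))"
proof (rule real_le_rsqrt)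
  have "0 \<le> variance (\<lambda>x. \<bar>f x\<bar>)"
    by (rule variance_positive)
  also have "\<dots> = expectation (\<lambda>x. f x ^ 2) - (expectation (\<lambda>x. \<bar>f x\<bar>))\<^sup>2"
    using assms by (subst variance_eq) auto
  finally show "(expectation (\<lambda>x. \<bar>f x\<bar>))\<^sup>2 \<le> expectation (\<lambda>x. f x ^ 2)"
    by simp
qed

section \<open>Uniform points in the unit cube\<close>

definition cube_unif :: "'a::euclidean_space measure" where
  "cube_unif = uniform_measure lborel (box 0 One)"

lemma emeasure_lborel_unit_box: "emeasure lborel (box 0 (One::'a::euclidean_space)) = 1"
  by (simp add: emeasure_lborel_box_eq)

lemma prob_space_cube_unif: "prob_space (cube_unif :: 'a::euclidean_space measure)"
  unfolding cube_unif_def by (rule prob_space_uniform_measure) (auto simp: emeasure_lborel_unit_box)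

lemma sets_cube_unif[measurable_cong, simp]: "sets cube_unif = sets borel"
  by (simp add: cube_unif_def)

lemma space_cube_unif[simp]: "space cube_unif = UNIV"
  by (simp add: cube_unif_def)

lemma emeasure_cube_unif: "A \<in> sets borel \<Longrightarrow> emeasure cube_unif A = emeasure lborel (A \<inter> box 0 One)"
  unfolding cube_unif_def by (subst emeasure_uniform_measure) (auto simp: emeasure_lborel_unit_box Int_commute divide_ennreal_def)

lemma AE_cube_unif_box: "AE x in (cube_unif::'a::euclidean_space measure). x \<in> box 0 One"
proof -
  have e: "(UNIV - box 0 (One::'a)) \<inter> box 0 One = {}" by auto
  have "emeasure cube_unif (UNIV - box 0 (One::'a)) = 0"
    by (subst emeasure_cube_unif) (auto simp only: e emeasure_empty, measurable)
  then show ?thesis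
    by (intro AE_I[of _ _ "UNIV - box 0 One"]) auto
qed

lemma measure_cube_unif_UNIV[simp]: "measure (cube_unif :: 'a::euclidean_space measure) UNIV = 1"
  using prob_space.prob_space[OF prob_space_cube_unif] by simp

lemma AE_cube_unif_cbox: "AE x in (cube_unif::'a::euclidean_space measure). x \<in> cbox 0 One"
  using AE_cube_unif_box by eventually_elim (use box_subset_cbox in auto)

definition ball_prob :: "'a::euclidean_space \<Rightarrow> real \<Rightarrow> real" where
  "ball_prob x r = measure cube_unif (cball x r)"

lemma ball_prob_nonneg: "0 \<le> ball_prob x r"
  by (simp add: ball_prob_def)

lemma ball_prob_le_1: "ball_prob x r \<le> 1"
  unfolding ball_prob_def by (metis prob_space.prob_le_1 prob_space_cube_unif)

lemma ball_prob_eq_lborel: "ball_prob x r = measure lborel (cball x r \<inter> box 0 One)"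
  unfolding ball_prob_def measure_def by (subst emeasure_cube_unif) auto

lemma unit_ball_volume_eq: "unit_ball_volume d = unit_ball_vol d"
  by (simp add: unit_ball_volume_def unit_ball_vol_def add_ac)

lemma ball_prob_interior:
  assumes "cball x r \<subseteq> box 0 One" "r \<ge> 0"
  shows "ball_prob (x::'a::euclidean_space) r = unit_ball_vol DIM('a) * r ^ DIM('a)"
proof -
  have "cball x r \<inter> box 0 One = cball x r" using assms by auto
  then show ?thesis using assms
    by (simp add: ball_prob_eq_lborel measure_def emeasure_cball)
qed

lemma ball_prob_le_ball_volume:
  assumes "r \<ge> 0"
  shows "ball_prob (x::'a::euclidean_space) r \<le> unit_ball_vol DIM('a) * r ^ DIM('a)"
proof -
  have "measure lborel (cball x r \<inter> box 0 One) \<le> measure lborel (cball x r)"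
  proof (rule measure_mono_fmeasurable)
    show "cball x r \<in> fmeasurable lborel"
      by (rule fmeasurable_compact) simp
  qed auto
  then show ?thesis using assms by (simp add: ball_prob_eq_lborel measure_def emeasure_cball)
qed

lemma box_subset_cball_inter_unit_box:
  fixes x :: "'a::euclidean_space" and h :: real
  assumes x: "x \<in> cbox 0 One" and h: "0 \<le> h" "h \<le> 1"
  defines "l \<equiv> (\<Sum>b\<in>Basis. min (x \<bullet> b) (1 - h) *\<^sub>R b)"
  shows "box l (l + h *\<^sub>R One) \<subseteq> cball x (DIM('a) * h) \<inter> box 0 One"
proof
  fix z assume "z \<in> box l (l + h *\<^sub>R One)"
  then have z: "\<forall>b\<in>Basis. l \<bullet> b < z \<bullet> b \<and> z \<bullet> b < l \<bullet> b + h"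
    by (auto simp: mem_box inner_add_left)
  have lb: "l \<bullet> b = min (x \<bullet> b) (1 - h)" if "b \<in> Basis" for b
    using that by (simp add: l_def inner_sum_left inner_Basis if_distrib cong: if_cong)
  have xb: "0 \<le> x \<bullet> b \<and> x \<bullet> b \<le> 1" if "b \<in> Basis" for b
    using x that by (auto simp: mem_box)
  have "z \<in> box 0 One"
    using z xb h by (auto simp: mem_box lb) (smt (verit, best))+
  moreover have "\<bar>(x - z) \<bullet> b\<bar> \<le> h" if "b \<in> Basis" for b
    using z that xb[OF that] lb[OF that] by (auto simp: inner_diff_left)
  then have "(\<Sum>b\<in>Basis. \<bar>(x - z) \<bullet> b\<bar>) \<le> (\<Sum>b\<in>(Basis::'a set). h)"
    by (intro sum_mono) auto
  then have "norm (x - z) \<le> DIM('a) * h"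
    using norm_le_l1[of "x - z"] by simp
  ultimately show "z \<in> cball x (DIM('a) * h) \<inter> box 0 One"
    by (simp add: dist_norm)
qed

lemma ball_prob_ge:
  assumes x: "x \<in> cbox 0 One" and r: "r \<ge> 0"
  shows "min (r / DIM('a)) 1 ^ DIM('a) \<le> ball_prob (x::'a::euclidean_space) r"
proof -
  define h where "h = min (r / DIM('a)) 1"
  have h: "0 \<le> h" "h \<le> 1" "DIM('a) * h \<le> r"
    using r by (auto simp: h_def field_simps min_def)
  define l :: 'a where "l = (\<Sum>b\<in>Basis. min (x \<bullet> b) (1 - h) *\<^sub>R b)"
  have "box l (l + h *\<^sub>R One) \<subseteq> cball x (DIM('a) * h) \<inter> box 0 One"
    unfolding l_def using x h by (intro box_subset_cball_inter_unit_box)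
  also have "\<dots> \<subseteq> cball x r \<inter> box 0 One"
    using h by auto
  finally have sub: "box l (l + h *\<^sub>R One) \<subseteq> cball x r \<inter> box 0 One" .
  have "emeasure lborel (box l (l + h *\<^sub>R One)) = ennreal (h ^ DIM('a))"
  proof (cases "h = 0")
    case False
    then have "\<forall>b\<in>Basis. l \<bullet> b \<le> (l + h *\<^sub>R One) \<bullet> b" using h by (auto simp: inner_add_left)
    then show ?thesis
      by (simp add: emeasure_lborel_box_eq inner_add_left prod_constant)
  qed simp
  then have "h ^ DIM('a) = measure lborel (box l (l + h *\<^sub>R One))"
    using h by (simp add: measure_def)
  also have "\<dots> \<le> measure lborel (cball x r \<inter> box 0 One)"
  proof (rule measure_mono_fmeasurable[OF sub])
    have "emeasure lborel (cball x r \<inter> box 0 One) \<le> emeasure lborel (box 0 (One::'a))"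
      by (intro emeasure_mono) auto
    then show "cball x r \<inter> box 0 One \<in> fmeasurable lborel"
      by (auto simp: fmeasurable_def emeasure_lborel_unit_box top_unique intro: le_less_trans)
  qed simp
  finally show ?thesis unfolding h_def ball_prob_eq_lborel .
qed

lemma borel_measurable_ball_prob_pair:
  "(\<lambda>p. ball_prob (fst p) (snd p)) \<in> borel_measurable (borel \<Otimes>\<^sub>M (borel :: real measure) :: ('a::euclidean_space \<times> real) measure)"
proof -
  interpret C: prob_space "cube_unif :: 'a measure" by (rule prob_space_cube_unif)
  define Q :: "(('a \<times> real) \<times> 'a) set" where "Q = {(p, z). dist (fst p) z \<le> snd p}"
  have Q: "Q \<in> sets ((borel \<Otimes>\<^sub>M borel) \<Otimes>\<^sub>M cube_unif)"
  proof -
    have "Q = {w \<in> space ((borel \<Otimes>\<^sub>M borel) \<Otimes>\<^sub>M cube_unif). dist (fst (fst w)) (snd w) \<le> snd (fst w)}"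
      by (auto simp: Q_def space_pair_measure)
    also have "\<dots> \<in> sets ((borel \<Otimes>\<^sub>M borel) \<Otimes>\<^sub>M cube_unif)"
      by measurable
    finally show ?thesis .
  qed
  have "(\<lambda>p. emeasure cube_unif (Pair p -` Q)) \<in> borel_measurable (borel \<Otimes>\<^sub>M borel)"
    by (rule C.measurable_emeasure_Pair[OF Q])
  then have "(\<lambda>p. enn2real (emeasure cube_unif (Pair p -` Q))) \<in> borel_measurable (borel \<Otimes>\<^sub>M borel)"
    by measurable
  moreover have "Pair p -` Q = cball (fst p) (snd p)" for p
    by (auto simp: Q_def)
  ultimately show ?thesis
    by (simp add: ball_prob_def measure_def)
qed

lemma borel_measurable_ball_prob[measurable (raw)]:
  assumes "f \<in> borel_measurable M" "g \<in> borel_measurable M"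
  shows "(\<lambda>x. ball_prob (f x) (g x :: real)) \<in> borel_measurable M"
proof -
  have "(\<lambda>x. (f x, g x)) \<in> measurable M (borel \<Otimes>\<^sub>M borel)"
    using assms by measurable
  from measurable_comp[OF this borel_measurable_ball_prob_pair] show ?thesis by (simp add: o_def)
qed

lemma one_minus_ball_prob_power_le_exp:
  assumes y: "y \<in> cbox 0 One" and t: "t \<ge> 0"
  shows "(1 - ball_prob (y::'a::euclidean_space) t) ^ n \<le> exp (- (n * (t / DIM('a)) ^ DIM('a)))"
proof (cases "t \<ge> DIM('a)")
  case True
  then have "min (t / DIM('a)) 1 = 1" by (auto simp: min_def field_simps)
  then have "ball_prob y t = 1" using ball_prob_ge[OF y t] ball_prob_le_1[of y t] by auto
  then show ?thesis by (cases n) auto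
next
  case False
  then have "(t / DIM('a)) ^ DIM('a) \<le> ball_prob y t" using ball_prob_ge[OF y t] by (auto simp: min_def field_simps)
  then have "exp (- (n * ball_prob y t)) \<le> exp (- (n * (t / DIM('a)) ^ DIM('a)))"
    by (auto intro: mult_left_mono)
  moreover have "(1 - ball_prob y t) ^ n \<le> exp (- (n * ball_prob y t))"
    by (rule one_minus_power_le_exp) (auto simp: ball_prob_nonneg ball_prob_le_1)
  ultimately show ?thesis by linarith
qed

lemma emeasure_cube_unif_Compl:
  assumes "A \<in> sets borel"
  shows "emeasure cube_unif (- A) = ennreal (1 - measure (cube_unif :: 'a::euclidean_space measure) A)"
proof -
  interpret prob_space "cube_unif :: 'a measure" by (rule prob_space_cube_unif)
  have "- A = space cube_unif - A" by auto
  then show ?thesis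
    using assms prob_compl[of A] by (simp add: emeasure_eq_measure)
qed

lemma one_minus_ball_prob_power_nonneg[simp]: "0 \<le> (1 - ball_prob x r) ^ n"
  using ball_prob_le_1[of x r] by simp

lemma one_minus_ball_prob_power_le_1[simp]: "(1 - ball_prob x r) ^ n \<le> 1"
  using ball_prob_nonneg[of x r] ball_prob_le_1[of x r] by (intro power_le_one) auto

text \<open>The probability that none of \<open>n\<close> independent uniform points lies within distance \<open>t\<close>
  of a further independent uniform point.\<close>

definition empty_ball_prob :: "'a::euclidean_space itself \<Rightarrow> nat \<Rightarrow> real \<Rightarrow> real" where
  "empty_ball_prob _ n t = (\<integral>y. (1 - ball_prob (y::'a) t) ^ n \<partial>cube_unif)"

lemma borel_measurable_empty_ball_prob[measurable]:
  "empty_ball_prob TYPE('a::euclidean_space) n \<in> borel_measurable borel"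
proof -
  interpret C: prob_space "cube_unif :: 'a measure" by (rule prob_space_cube_unif)
  have "(\<lambda>(t, y). (1 - ball_prob (y::'a) t) ^ n) \<in> borel_measurable (borel \<Otimes>\<^sub>M cube_unif)"
    by measurable
  then show ?thesis unfolding empty_ball_prob_def by (rule C.borel_measurable_lebesgue_integral)
qed

lemma integrable_one_minus_ball_prob_power:
  "integrable cube_unif (\<lambda>y. (1 - ball_prob (y::'a::euclidean_space) t) ^ n)"
proof -
  interpret C: prob_space "cube_unif :: 'a measure" by (rule prob_space_cube_unif)
  show ?thesis by (rule C.integrable_const_bound[where B=1]) auto
qed

lemma nn_integral_eq_empty_ball_prob:
  "(\<integral>\<^sup>+y. ennreal ((1 - ball_prob (y::'a::euclidean_space) t) ^ n) \<partial>cube_unif)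
    = ennreal (empty_ball_prob TYPE('a) n t)"
  unfolding empty_ball_prob_def
  by (rule nn_integral_eq_integral) (auto intro: integrable_one_minus_ball_prob_power)

lemma empty_ball_prob_nonneg: "0 \<le> empty_ball_prob TYPE('a::euclidean_space) n t"
  unfolding empty_ball_prob_def by (rule integral_nonneg_AE) auto

lemma empty_ball_prob_le_exp:
  assumes "t \<ge> 0"
  shows "empty_ball_prob TYPE('a::euclidean_space) n t \<le> exp (- (n * (t / DIM('a)) ^ DIM('a)))"
proof -
  interpret C: prob_space "cube_unif :: 'a measure" by (rule prob_space_cube_unif)
  have "empty_ball_prob TYPE('a) n t \<le> (\<integral>y. exp (- (n * (t / DIM('a)) ^ DIM('a))) \<partial>(cube_unif :: 'a measure))"
    unfolding empty_ball_prob_def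
    using AE_cube_unif_cbox
    by (intro integral_mono_AE integrable_one_minus_ball_prob_power)
       (auto elim!: eventually_mono intro!: one_minus_ball_prob_power_le_exp assms)
  then show ?thesis by simp
qed

lemma empty_ball_prob_Suc_le:
  "empty_ball_prob TYPE('a::euclidean_space) (Suc n) t \<le> empty_ball_prob TYPE('a) n t"
  unfolding empty_ball_prob_def
  by (intro integral_mono integrable_one_minus_ball_prob_power)
     (auto intro!: mult_left_le_one_le simp: ball_prob_nonneg ball_prob_le_1)

section \<open>Distribution of the nearest-neighbour distances\<close>

lemma ong_nn_dist_nonneg: "i \<ge> 1 \<Longrightarrow> 0 \<le> ong_nn_dist x i"
  unfolding ong_nn_dist_def by (subst Min_ge_iff) (auto simp: lessThan_empty_iff)

lemma ong_nn_dist_gt_iff: "i \<ge> 1 \<Longrightarrow> t < ong_nn_dist x i \<longleftrightarrow> (\<forall>k<i. t < dist (x i) (x k))"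
  unfolding ong_nn_dist_def by (subst Min_gr_iff) (auto simp: lessThan_empty_iff)

lemma ong_nn_dist_restrict: "i \<in> I \<Longrightarrow> {..<i} \<subseteq> I \<Longrightarrow> ong_nn_dist (restrict x I) i = ong_nn_dist x i"
  unfolding ong_nn_dist_def by (intro arg_cong[where f=Min] image_cong) auto

lemma prob_space_PiM_cube_unif: "prob_space (PiM I (\<lambda>_. cube_unif :: 'a::euclidean_space measure))"
  by (intro prob_space_PiM prob_space_cube_unif)

lemma product_prob_space_cube_unif: "product_prob_space (\<lambda>_. cube_unif :: 'a::euclidean_space measure)"
  by (intro product_prob_spaceI prob_space_cube_unif)

lemma borel_measurable_ong_nn_dist[measurable]:
  assumes "i \<in> I" "{..<i} \<subseteq> I"
  shows "(\<lambda>x. ong_nn_dist x i) \<in> borel_measurable (PiM I (\<lambda>_. cube_unif :: 'a::euclidean_space measure))"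
  unfolding ong_nn_dist_def
proof (rule borel_measurable_Min)
  fix j assume "j \<in> {..<i}"
  then have "j \<in> I" using assms by auto
  then show "(\<lambda>x. dist (x i) (x j)) \<in> borel_measurable (PiM I (\<lambda>_. cube_unif :: 'a measure))"
    using assms by measurable
qed simp

lemma prod_indicator_ennreal:
  assumes "finite K"
  shows "(\<Prod>k\<in>K. (indicator (A k) (f k) :: ennreal)) = (if \<forall>k\<in>K. f k \<in> A k then 1 else 0)"
  using assms by (induction K rule: finite_induct) (auto simp: indicator_def)

lemma (in product_sigma_finite) product_nn_integral_insert2_rev:
  assumes I: "finite I" "i \<notin> I" "j \<notin> insert i I"
    and [measurable]: "f \<in> borel_measurable (Pi\<^sub>M (insert j (insert i I)) M)"
  shows "integral\<^sup>N (Pi\<^sub>M (insert j (insert i I)) M) f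
    = (\<integral>\<^sup>+z. \<integral>\<^sup>+y. \<integral>\<^sup>+x. f (x(i := y, j := z)) \<partial>Pi\<^sub>M I M \<partial>M i \<partial>M j)"
proof -
  have "integral\<^sup>N (Pi\<^sub>M (insert j (insert i I)) M) f
      = (\<integral>\<^sup>+z. \<integral>\<^sup>+x. f (x(j := z)) \<partial>Pi\<^sub>M (insert i I) M \<partial>M j)"
    using I by (intro product_nn_integral_insert_rev) auto
  also have "\<dots> = (\<integral>\<^sup>+z. \<integral>\<^sup>+y. \<integral>\<^sup>+x. f (x(i := y, j := z)) \<partial>Pi\<^sub>M I M \<partial>M i \<partial>M j)"
  proof (intro nn_integral_cong product_nn_integral_insert_rev)
    fix z assume "z \<in> space (M j)"
    then have "(\<lambda>x. x(j := z)) \<in> measurable (Pi\<^sub>M (insert i I) M) (Pi\<^sub>M (insert j (insert i I)) M)"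
      by (intro measurable_fun_upd[where J="insert i I"]) auto
    then show "(\<lambda>x. f (x(j := z))) \<in> borel_measurable (Pi\<^sub>M (insert i I) M)"
      by measurable
  qed (use I in auto)
  finally show ?thesis .
qed

lemma emeasure_ong_nn_dist_greater:
  assumes i: "i \<ge> 1"
  defines "P \<equiv> PiM {..i} (\<lambda>_. cube_unif :: 'a::euclidean_space measure)"
  shows "emeasure P {x \<in> space P. t < ong_nn_dist x i} = ennreal (empty_ball_prob TYPE('a) i t)"
proof -
  interpret product_prob_space "\<lambda>_::nat. cube_unif :: 'a measure" by (rule product_prob_space_cube_unif)
  define A where "A = {x \<in> space P. t < ong_nn_dist x i}"
  have [measurable]: "(\<lambda>x. ong_nn_dist x i) \<in> borel_measurable P"
    unfolding P_def by (intro borel_measurable_ong_nn_dist) auto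
  then have [measurable]: "A \<in> sets P"
    unfolding A_def by measurable
  have atMost_eq: "{..i} = insert i {..<i}" by auto
  have "emeasure P A = (\<integral>\<^sup>+x. indicator A x \<partial>P)"
    by simp
  also have "\<dots> = (\<integral>\<^sup>+y. \<integral>\<^sup>+x. indicator A (x(i := y)) \<partial>PiM {..<i} (\<lambda>_. cube_unif) \<partial>cube_unif)"
    unfolding P_def atMost_eq
    by (rule product_nn_integral_insert_rev) (use \<open>A \<in> sets P\<close> in \<open>auto simp: P_def atMost_eq\<close>)
  also have "\<dots> = (\<integral>\<^sup>+y. \<integral>\<^sup>+x. (\<Prod>k\<in>{..<i}. indicator {z. t < dist (y::'a) z} (x k)) \<partial>PiM {..<i} (\<lambda>_. cube_unif) \<partial>cube_unif)"
  proof (intro nn_integral_cong)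
    fix y x assume "x \<in> space (PiM {..<i} (\<lambda>_. cube_unif :: 'a measure))"
    then have "x(i := y) \<in> space P"
      by (auto simp: P_def space_PiM PiE_iff extensional_def)
    then show "indicator A (x(i := y)) = (\<Prod>k\<in>{..<i}. indicator {z. t < dist y z} (x k) :: ennreal)"
      using i by (auto simp: A_def prod_indicator_ennreal ong_nn_dist_gt_iff indicator_def)
  qed
  also have "\<dots> = (\<integral>\<^sup>+y. (\<Prod>k\<in>{..<i}. emeasure cube_unif {z. t < dist (y::'a) z}) \<partial>cube_unif)"
    by (subst product_nn_integral_prod) auto
  also have "\<dots> = (\<integral>\<^sup>+y. ennreal ((1 - ball_prob (y::'a) t) ^ i) \<partial>cube_unif)"
  proof (intro nn_integral_cong)
    fix y :: 'a
    have "{z. t < dist y z} = - cball y t" by (auto simp: not_le)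
    then show "(\<Prod>k\<in>{..<i}. emeasure cube_unif {z. t < dist y z}) = ennreal ((1 - ball_prob y t) ^ i)"
      by (simp add: emeasure_cube_unif_Compl ball_prob_def ennreal_power ball_prob_le_1[unfolded ball_prob_def])
  qed
  finally show ?thesis
    by (simp add: A_def nn_integral_eq_empty_ball_prob)
qed

lemma prod_emeasure_avoid_balls:
  fixes y z :: "'a::euclidean_space"
  shows "(\<Prod>k\<in>{..<i} \<union> {i<..<j}. emeasure cube_unif {w. (k < i \<longrightarrow> t < dist y w) \<and> s < dist z w})
    = ennreal ((1 - measure cube_unif (cball y t \<union> cball z s)) ^ i * (1 - ball_prob z s) ^ (j - Suc i))"
proof -
  interpret C: prob_space "cube_unif :: 'a measure" by (rule prob_space_cube_unif)
  have "emeasure cube_unif {w. (k < i \<longrightarrow> t < dist y w) \<and> s < dist z w}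
      = ennreal (1 - measure cube_unif (cball y t \<union> cball z s))" if "k < i" for k
  proof -
    have "{w. (k < i \<longrightarrow> t < dist y w) \<and> s < dist z w} = - (cball y t \<union> cball z s)"
      using that by (auto simp: not_le)
    then show ?thesis
      by (metis emeasure_cube_unif_Compl sets.Un sets_lborel borel_closed closed_cball)
  qed
  moreover have "emeasure cube_unif {w. (k < i \<longrightarrow> t < dist y w) \<and> s < dist z w} = ennreal (1 - ball_prob z s)"
    if "k \<in> {i<..<j}" for k
  proof -
    have "{w. (k < i \<longrightarrow> t < dist y w) \<and> s < dist z w} = - cball z s"
      using that by (auto simp: not_le)
    then show ?thesis by (simp add: emeasure_cube_unif_Compl ball_prob_def)
  qed
  moreover have "measure cube_unif (cball y t \<union> cball z s) \<le> 1" "ball_prob z s \<le> 1"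
    by (simp_all add: C.prob_le_1 ball_prob_le_1)
  ultimately show ?thesis
    by (subst prod.union_disjoint) (auto simp: ennreal_mult ennreal_power)
qed

lemma emeasure_ong_nn_dist_joint_greater:
  assumes ij: "1 \<le> i" "i < j"
  defines "P \<equiv> PiM {..j} (\<lambda>_. cube_unif :: 'a::euclidean_space measure)"
  shows "emeasure P {x \<in> space P. t < ong_nn_dist x i \<and> s < ong_nn_dist x j}
    = (\<integral>\<^sup>+z. \<integral>\<^sup>+y. ennreal (indicator {w. s < dist (z::'a) w} y
        * (1 - measure cube_unif (cball y t \<union> cball z s)) ^ i * (1 - ball_prob z s) ^ (j - Suc i))
      \<partial>cube_unif \<partial>cube_unif)"
proof -
  interpret C: prob_space "cube_unif :: 'a measure" by (rule prob_space_cube_unif)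
  interpret product_prob_space "\<lambda>_::nat. cube_unif :: 'a measure" by (rule product_prob_space_cube_unif)
  define R where "R = {..<i} \<union> {i<..<j}"
  define S where "S = (\<lambda>k (y::'a) (z::'a). {w. (k < i \<longrightarrow> t < dist y w) \<and> s < dist z w})"
  define A where "A = {x \<in> space P. t < ong_nn_dist x i \<and> s < ong_nn_dist x j}"
  have R: "finite R" "i \<notin> R" "j \<notin> insert i R" and atMost_eq: "{..j} = insert j (insert i R)"
    using ij by (auto simp: R_def)
  have [measurable]: "(\<lambda>x. ong_nn_dist x i) \<in> borel_measurable P" "(\<lambda>x. ong_nn_dist x j) \<in> borel_measurable P"
    unfolding P_def using ij by (auto intro!: borel_measurable_ong_nn_dist)
  then have [measurable]: "A \<in> sets P"
    unfolding A_def by measurable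
  have "emeasure P A = (\<integral>\<^sup>+x. indicator A x \<partial>P)"
    by simp
  also have "\<dots> = (\<integral>\<^sup>+z. \<integral>\<^sup>+y. \<integral>\<^sup>+x. indicator A (x(i := y, j := z)) \<partial>PiM R (\<lambda>_. cube_unif) \<partial>cube_unif \<partial>cube_unif)"
    unfolding P_def atMost_eq
    by (rule product_nn_integral_insert2_rev) (use R \<open>A \<in> sets P\<close> in \<open>auto simp: P_def atMost_eq\<close>)
  also have "\<dots> = (\<integral>\<^sup>+z. \<integral>\<^sup>+y. \<integral>\<^sup>+x. indicator {w. s < dist z w} y * (\<Prod>k\<in>R. indicator (S k y z) (x k))
      \<partial>PiM R (\<lambda>_. cube_unif) \<partial>cube_unif \<partial>cube_unif)"
  proof (intro nn_integral_cong)
    fix z y :: 'a and x assume "x \<in> space (PiM R (\<lambda>_. cube_unif :: 'a measure))"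
    then have "x(i := y, j := z) \<in> space P"
      by (auto simp: P_def atMost_eq space_PiM PiE_iff extensional_def)
    moreover have "t < ong_nn_dist (x(i := y, j := z)) i \<longleftrightarrow> (\<forall>k<i. t < dist y (x k))"
      using ij by (subst ong_nn_dist_gt_iff) auto
    moreover have "s < ong_nn_dist (x(i := y, j := z)) j \<longleftrightarrow> s < dist z y \<and> (\<forall>k\<in>R. s < dist z (x k))"
      using ij by (subst ong_nn_dist_gt_iff) (auto simp: R_def dist_commute)
    ultimately have "x(i := y, j := z) \<in> A \<longleftrightarrow> s < dist z y \<and> (\<forall>k\<in>R. x k \<in> S k y z)"
      by (auto simp: A_def S_def R_def)
    then show "indicator A (x(i := y, j := z)) = indicator {w. s < dist z w} y * (\<Prod>k\<in>R. indicator (S k y z) (x k) :: ennreal)"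
      using R(1) by (simp add: prod_indicator_ennreal indicator_def)
  qed
  also have "\<dots> = (\<integral>\<^sup>+z. \<integral>\<^sup>+y. indicator {w. s < dist z w} y * (\<Prod>k\<in>R. emeasure cube_unif (S k y z))
      \<partial>cube_unif \<partial>cube_unif)"
  proof (intro nn_integral_cong)
    fix z y :: 'a
    have S_sets[measurable]: "S k y z \<in> sets cube_unif" for k
      unfolding S_def by measurable
    have "(\<lambda>x. \<Prod>k\<in>R. indicator (S k y z) (x k) :: ennreal) \<in> borel_measurable (PiM R (\<lambda>_. cube_unif))"
      by (intro borel_measurable_prod_ennreal) measurable
    then have "(\<integral>\<^sup>+x. indicator {w. s < dist z w} y * (\<Prod>k\<in>R. indicator (S k y z) (x k)) \<partial>PiM R (\<lambda>_. cube_unif))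
        = indicator {w. s < dist z w} y * (\<integral>\<^sup>+x. (\<Prod>k\<in>R. indicator (S k y z) (x k)) \<partial>PiM R (\<lambda>_. cube_unif))"
      by (rule nn_integral_cmult)
    also have "\<dots> = indicator {w. s < dist z w} y * (\<Prod>k\<in>R. emeasure cube_unif (S k y z))"
      using R S_sets by (subst product_nn_integral_prod) auto
    finally show "(\<integral>\<^sup>+x. indicator {w. s < dist z w} y * (\<Prod>k\<in>R. indicator (S k y z) (x k)) \<partial>PiM R (\<lambda>_. cube_unif))
        = indicator {w. s < dist z w} y * (\<Prod>k\<in>R. emeasure cube_unif (S k y z))" .
  qed
  also have "\<dots> = (\<integral>\<^sup>+z. \<integral>\<^sup>+y. ennreal (indicator {w. s < dist (z::'a) w} y
        * (1 - measure cube_unif (cball y t \<union> cball z s)) ^ i * (1 - ball_prob z s) ^ (j - Suc i))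
      \<partial>cube_unif \<partial>cube_unif)"
  proof (intro nn_integral_cong)
    fix z y :: 'a
    show "indicator {w. s < dist z w} y * (\<Prod>k\<in>R. emeasure cube_unif (S k y z))
        = ennreal (indicator {w. s < dist z w} y
          * (1 - measure cube_unif (cball y t \<union> cball z s)) ^ i * (1 - ball_prob z s) ^ (j - Suc i))"
      unfolding R_def S_def prod_emeasure_avoid_balls
      by (simp add: ennreal_mult' ennreal_indicator mult.assoc)
  qed
  finally show ?thesis
    by (simp add: A_def)
qed

section \<open>Moments of the nearest-neighbour distances\<close>

definition nn_dist_moment :: "'a::euclidean_space itself \<Rightarrow> real \<Rightarrow> nat \<Rightarrow> real" where
  "nn_dist_moment T a n = (\<integral>t. powr_density a t * empty_ball_prob T n t \<partial>lborel)"

lemma nn_integral_empty_ball_prob_le_gamma_moment: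
  assumes a: "a > 0" and n: "n \<ge> 1"
  shows "(\<integral>\<^sup>+t. ennreal (powr_density a t * empty_ball_prob TYPE('a::euclidean_space) n t) \<partial>lborel)
    \<le> ennreal (gamma_moment a DIM('a) 0 (n / DIM('a) ^ DIM('a)))"
proof -
  have "(\<integral>\<^sup>+t. ennreal (powr_density a t * empty_ball_prob TYPE('a) n t) \<partial>lborel)
      \<le> (\<integral>\<^sup>+t. ennreal (powr_density a t * t ^ 0 * exp (- (n / DIM('a) ^ DIM('a)) * t ^ DIM('a))) \<partial>lborel)"
  proof (intro nn_integral_mono ennreal_leI)
    fix t :: real
    show "powr_density a t * empty_ball_prob TYPE('a) n t
        \<le> powr_density a t * t ^ 0 * exp (- (n / DIM('a) ^ DIM('a)) * t ^ DIM('a))"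
    proof (cases "t > 0")
      case True
      then have "empty_ball_prob TYPE('a) n t \<le> exp (- (n * (t / DIM('a)) ^ DIM('a)))"
        by (intro empty_ball_prob_le_exp) auto
      also have "\<dots> = exp (- (n / DIM('a) ^ DIM('a)) * t ^ DIM('a))"
        by (simp add: power_divide)
      finally show ?thesis
        using a by (simp add: mult_left_mono powr_density_nonneg)
    qed (simp add: powr_density_def)
  qed
  also have "\<dots> = ennreal (gamma_moment a DIM('a) 0 (n / DIM('a) ^ DIM('a)))"
    using n by (intro nn_integral_powr_density_gamma_moment a) auto
  finally show ?thesis .
qed

lemma integrable_powr_density_empty_ball_prob:
  assumes "a > 0" "n \<ge> 1"
  shows "integrable lborel (\<lambda>t. powr_density a t * empty_ball_prob TYPE('a::euclidean_space) n t)"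
  using nn_integral_empty_ball_prob_le_gamma_moment[OF assms, where 'a='a] assms
  by (intro integrableI_nonneg) (auto simp: powr_density_nonneg empty_ball_prob_nonneg intro: le_less_trans)

lemma nn_integral_eq_nn_dist_moment:
  assumes "a > 0" "n \<ge> 1"
  shows "(\<integral>\<^sup>+t. ennreal (powr_density a t * empty_ball_prob TYPE('a::euclidean_space) n t) \<partial>lborel)
    = ennreal (nn_dist_moment TYPE('a) a n)"
  unfolding nn_dist_moment_def using assms
  by (intro nn_integral_eq_integral integrable_powr_density_empty_ball_prob)
     (auto simp: powr_density_nonneg empty_ball_prob_nonneg)

lemma nn_dist_moment_nonneg: "a \<ge> 0 \<Longrightarrow> 0 \<le> nn_dist_moment TYPE('a::euclidean_space) a n"
  unfolding nn_dist_moment_def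
  by (intro integral_nonneg_AE) (auto simp: powr_density_nonneg empty_ball_prob_nonneg)

lemma nn_dist_moment_le_gamma_moment:
  assumes "a > 0" "n \<ge> 1"
  shows "nn_dist_moment TYPE('a::euclidean_space) a n \<le> gamma_moment a DIM('a) 0 (n / DIM('a) ^ DIM('a))"
  using nn_integral_empty_ball_prob_le_gamma_moment[OF assms, where 'a='a] assms
  by (simp add: nn_integral_eq_nn_dist_moment gamma_moment_nonneg)

lemma nn_dist_moment_le_powr:
  assumes a: "a > 0" and n: "n \<ge> 1"
  shows "nn_dist_moment TYPE('a::euclidean_space) a n
    \<le> gamma_moment a DIM('a) 0 (1 / DIM('a) ^ DIM('a)) * real n powr (- (a / DIM('a)))"
  using nn_dist_moment_le_gamma_moment[OF a n, where 'a='a]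
    gamma_moment_scale[of "real n" "1 / DIM('a) ^ DIM('a)" a "DIM('a)" 0] n
  by simp

lemma nn_dist_moment_antimono:
  assumes a: "a > 0" and mn: "1 \<le> m" "m \<le> n"
  shows "nn_dist_moment TYPE('a::euclidean_space) a n \<le> nn_dist_moment TYPE('a) a m"
  using mn(2)
proof (induction n rule: dec_induct)
  case (step n)
  have "nn_dist_moment TYPE('a) a (Suc n) \<le> nn_dist_moment TYPE('a) a n"
    unfolding nn_dist_moment_def using a mn step.hyps
    by (intro integral_mono integrable_powr_density_empty_ball_prob mult_left_mono
        empty_ball_prob_Suc_le powr_density_nonneg) auto
  then show ?case using step.IH by linarith
qed simp

lemma nn_integral_PiM_ong_nn_dist_powr:
  assumes i: "i \<ge> 1" and a: "a > 0"
  shows "(\<integral>\<^sup>+x. ennreal (ong_nn_dist x i powr a) \<partial>PiM {..i} (\<lambda>_. cube_unif :: 'a::euclidean_space measure))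
    = ennreal (nn_dist_moment TYPE('a) a i)"
proof -
  interpret P: prob_space "PiM {..i} (\<lambda>_. cube_unif :: 'a measure)"
    by (rule prob_space_PiM_cube_unif)
  have "(\<integral>\<^sup>+x. ennreal (ong_nn_dist x i powr a) \<partial>PiM {..i} (\<lambda>_. cube_unif :: 'a measure))
      = (\<integral>\<^sup>+t. ennreal (powr_density a t) * emeasure (PiM {..i} (\<lambda>_. cube_unif :: 'a measure))
          {x \<in> space (PiM {..i} (\<lambda>_. cube_unif)). t < ong_nn_dist x i} \<partial>lborel)"
    using i a
    by (intro nn_integral_powr_eq_tail P.sigma_finite_measure_axioms borel_measurable_ong_nn_dist
        ong_nn_dist_nonneg) auto
  also have "\<dots> = (\<integral>\<^sup>+t. ennreal (powr_density a t * empty_ball_prob TYPE('a) i t) \<partial>lborel)"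
    using a i by (simp add: emeasure_ong_nn_dist_greater ennreal_mult powr_density_nonneg empty_ball_prob_nonneg)
  also have "\<dots> = ennreal (nn_dist_moment TYPE('a) a i)"
    by (rule nn_integral_eq_nn_dist_moment[OF a i])
  finally show ?thesis .
qed

lemma powr_inverse_power:
  assumes "d > 0" "n \<ge> 1"
  shows "(real n powr (- 1 / real d)) ^ d = 1 / real n"
proof -
  have "(real n powr (- 1 / real d)) ^ d = real n powr (- 1 / real d * d)"
    using assms by (simp add: powr_realpow[symmetric] powr_powr)
  also have "\<dots> = 1 / real n"
    using assms by (simp add: powr_minus_divide)
  finally show ?thesis .
qed

lemma one_minus_ball_prob_rescaled_tendsto:
  fixes y :: "'a::euclidean_space"
  assumes y: "y \<in> box 0 One" and s: "s > 0"
  shows "(\<lambda>n. (1 - ball_prob y (real n powr (- 1 / DIM('a)) * s)) ^ n)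
    \<longlonglongrightarrow> exp (- (unit_ball_vol DIM('a) * s ^ DIM('a)))"
proof -
  obtain e where e: "e > 0" "cball y e \<subseteq> box 0 One"
    using open_contains_cball[THEN iffD1, OF open_box] y by blast
  have "(\<lambda>n. real n powr (- 1 / DIM('a))) \<longlonglongrightarrow> 0"
    by (intro tendsto_neg_powr filterlim_real_sequentially) auto
  then have "\<forall>\<^sub>F n in sequentially. real n powr (- 1 / DIM('a)) < e / s"
    using e s by (intro order_tendstoD) auto
  moreover have "\<forall>\<^sub>F n in sequentially. n \<ge> (1::nat)"
    by (rule eventually_ge_at_top)
  ultimately have ev: "\<forall>\<^sub>F n in sequentially. (1 - ball_prob y (real n powr (- 1 / DIM('a)) * s)) ^ n =
      (1 + (- (unit_ball_vol DIM('a) * s ^ DIM('a))) / real n) ^ n"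
  proof eventually_elim
    case (elim n)
    then have "real n powr (- 1 / DIM('a)) * s \<le> e"
      using s by (simp add: field_simps)
    then have "cball y (real n powr (- 1 / DIM('a)) * s) \<subseteq> box 0 One"
      using e by (intro order_trans[OF subset_cball e(2)])
    then have "ball_prob y (real n powr (- 1 / DIM('a)) * s)
        = unit_ball_vol DIM('a) * (real n powr (- 1 / DIM('a))) ^ DIM('a) * s ^ DIM('a)"
      using s by (simp add: ball_prob_interior power_mult_distrib)
    also have "\<dots> = unit_ball_vol DIM('a) * s ^ DIM('a) / real n"
      using elim powr_inverse_power[of "DIM('a)" n] by simp
    finally show ?case
      by simp
  qed
  show ?thesis
    by (rule Lim_transform_eventually[OF tendsto_exp_limit_sequentially]) (use ev in \<open>simp add: eventually_mono\<close>)
qed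

lemma empty_ball_prob_rescaled_tendsto:
  assumes s: "s > 0"
  shows "(\<lambda>n. empty_ball_prob TYPE('a::euclidean_space) n (real n powr (- 1 / DIM('a)) * s))
    \<longlonglongrightarrow> exp (- (unit_ball_vol DIM('a) * s ^ DIM('a)))"
proof -
  interpret C: prob_space "cube_unif :: 'a measure" by (rule prob_space_cube_unif)
  have "(\<lambda>n. empty_ball_prob TYPE('a) n (real n powr (- 1 / DIM('a)) * s))
      \<longlonglongrightarrow> (\<integral>y. exp (- (unit_ball_vol DIM('a) * s ^ DIM('a))) \<partial>(cube_unif :: 'a measure))"
    unfolding empty_ball_prob_def
  proof (rule integral_dominated_convergence[where w="\<lambda>_. 1"])
    show "AE y in cube_unif. (\<lambda>n. (1 - ball_prob (y::'a) (real n powr (- 1 / DIM('a)) * s)) ^ n)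
        \<longlonglongrightarrow> exp (- (unit_ball_vol DIM('a) * s ^ DIM('a)))"
      using AE_cube_unif_box by eventually_elim (rule one_minus_ball_prob_rescaled_tendsto[OF _ s])
  qed auto
  then show ?thesis by simp
qed

lemma empty_ball_prob_rescaled_le:
  assumes n: "n \<ge> 1" and s: "s \<ge> 0"
  shows "empty_ball_prob TYPE('a::euclidean_space) n (real n powr (- 1 / DIM('a)) * s)
    \<le> exp (- (1 / real DIM('a) ^ DIM('a)) * s ^ DIM('a))"
proof -
  have "empty_ball_prob TYPE('a) n (real n powr (- 1 / DIM('a)) * s)
      \<le> exp (- (n * (real n powr (- 1 / DIM('a)) * s / DIM('a)) ^ DIM('a)))"
    using s by (intro empty_ball_prob_le_exp) simp
  also have "n * (real n powr (- 1 / DIM('a)) * s / DIM('a)) ^ DIM('a) = (1 / real DIM('a) ^ DIM('a)) * s ^ DIM('a)"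
    using powr_inverse_power[of "DIM('a)" n] n by (simp add: power_mult_distrib power_divide)
  finally show ?thesis
    by simp
qed

lemma nn_dist_moment_rescaled:
  assumes a: "a > 0" and n: "n \<ge> 1"
  shows "real n powr (a / DIM('a)) * nn_dist_moment TYPE('a::euclidean_space) a n
    = (\<integral>s. powr_density a s * empty_ball_prob TYPE('a) n (real n powr (- 1 / DIM('a)) * s) \<partial>lborel)"
proof -
  define c where "c = real n powr (- 1 / DIM('a))"
  have c: "c > 0" using n by (simp add: c_def)
  have wpc: "powr_density a (c * s) = c powr (a - 1) * powr_density a s" for s
    using c by (cases "s > 0") (auto simp: powr_density_def powr_mult zero_less_mult_iff)
  have "nn_dist_moment TYPE('a) a n
      = c * (\<integral>s. powr_density a (c * s) * empty_ball_prob TYPE('a) n (c * s) \<partial>lborel)"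
    unfolding nn_dist_moment_def
    using lborel_integral_real_affine[of c "\<lambda>t. powr_density a t * empty_ball_prob TYPE('a) n t" 0] c
    by simp
  also have "\<dots> = c * (c powr (a - 1) * (\<integral>s. powr_density a s * empty_ball_prob TYPE('a) n (c * s) \<partial>lborel))"
    by (simp add: wpc mult.assoc)
  also have "\<dots> = c powr a * (\<integral>s. powr_density a s * empty_ball_prob TYPE('a) n (c * s) \<partial>lborel)"
    using c by (simp add: powr_diff)
  finally show ?thesis
    using n unfolding c_def by (simp add: powr_powr powr_add[symmetric])
qed

lemma nn_dist_moment_asymptotics:
  assumes a: "a > 0"
  shows "(\<lambda>n. real n powr (a / DIM('a)) * nn_dist_moment TYPE('a::euclidean_space) a n)
    \<longlonglongrightarrow> Gamma (1 + a / DIM('a)) * unit_ball_vol DIM('a) powr (- a / DIM('a))"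
proof -
  define D where "D = DIM('a)"
  define v where "v = unit_ball_vol D"
  have D: "D > 0" and v: "v > 0" by (simp_all add: D_def v_def)
  define h where "h = (\<lambda>n s. powr_density a s * empty_ball_prob TYPE('a) n (real n powr (- 1 / D) * s))"
  have "(\<lambda>n. \<integral>s. h (Suc n) s \<partial>lborel) \<longlonglongrightarrow> (\<integral>s. powr_density a s * exp (- v * s ^ D) \<partial>lborel)"
  proof (rule integral_dominated_convergence[where w="\<lambda>s. powr_density a s * exp (- (1 / real D ^ D) * s ^ D)"])
    show "integrable lborel (\<lambda>s. powr_density a s * exp (- (1 / real D ^ D) * s ^ D))"
      by (rule integrable.intros[OF has_bochner_integral_powr_density_exp[OF a _ D]])
        (use D in simp)
    show "AE s in lborel. (\<lambda>n. h (Suc n) s) \<longlonglongrightarrow> powr_density a s * exp (- v * s ^ D)"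
    proof (intro AE_I2)
      fix s :: real
      show "(\<lambda>n. h (Suc n) s) \<longlonglongrightarrow> powr_density a s * exp (- v * s ^ D)"
      proof (cases "s > 0")
        case True
        have "(\<lambda>n. empty_ball_prob TYPE('a) n (real n powr (- 1 / D) * s)) \<longlonglongrightarrow> exp (- (v * s ^ D))"
          unfolding D_def v_def by (rule empty_ball_prob_rescaled_tendsto[OF True])
        then have "(\<lambda>n. empty_ball_prob TYPE('a) (Suc n) (real (Suc n) powr (- 1 / D) * s)) \<longlonglongrightarrow> exp (- (v * s ^ D))"
          by (rule LIMSEQ_Suc)
        then show ?thesis
          unfolding h_def by (auto intro: tendsto_mult_left)
      qed (simp add: h_def powr_density_def)
    qed
    show "AE s in lborel. norm (h (Suc n) s) \<le> powr_density a s * exp (- (1 / real D ^ D) * s ^ D)" for n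
    proof (intro AE_I2)
      fix s :: real
      show "norm (h (Suc n) s) \<le> powr_density a s * exp (- (1 / real D ^ D) * s ^ D)"
      proof (cases "s > 0")
        case True
        have "empty_ball_prob TYPE('a) (Suc n) (real (Suc n) powr (- 1 / D) * s) \<le> exp (- (1 / real D ^ D) * s ^ D)"
          unfolding D_def using True by (intro empty_ball_prob_rescaled_le) auto
        then show ?thesis
          using a by (simp add: h_def abs_mult empty_ball_prob_nonneg powr_density_nonneg mult_left_mono)
      qed (simp add: h_def powr_density_def)
    qed
  qed (unfold h_def, measurable)
  moreover have "(\<integral>s. powr_density a s * exp (- v * s ^ D) \<partial>lborel) = Gamma (1 + a / D) * v powr (- a / D)"
    using has_bochner_integral_powr_density_exp[OF a v D] gamma_moment_0[OF a D v]
    by (simp add: has_bochner_integral_integral_eq)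
  moreover have "real (Suc n) powr (a / D) * nn_dist_moment TYPE('a) a (Suc n) = (\<integral>s. h (Suc n) s \<partial>lborel)" for n
    unfolding h_def D_def by (rule nn_dist_moment_rescaled[OF a]) simp
  ultimately have "(\<lambda>n. real (Suc n) powr (a / D) * nn_dist_moment TYPE('a) a (Suc n))
      \<longlonglongrightarrow> Gamma (1 + a / D) * v powr (- a / D)"
    by simp
  then show ?thesis
    unfolding D_def v_def by (rule LIMSEQ_imp_Suc)
qed

(* Disjoint balls make the avoidance probability factorise. Otherwise y lies within t + s
   of z, and only the decay of the two empty-ball probabilities is kept, split evenly
   between them by the square root. *)
lemma joint_tail_integrand_le:
  fixes y z :: "'a::euclidean_space"
  assumes y: "y \<in> cbox 0 One" and z: "z \<in> cbox 0 One" and ij: "1 \<le> i" "i < j"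
    and ts: "0 \<le> t" "0 \<le> s"
  shows "indicator {w. s < dist z w} y * (1 - measure cube_unif (cball y t \<union> cball z s)) ^ i
      * (1 - ball_prob z s) ^ (j - Suc i)
    \<le> (1 - ball_prob y t) ^ i * (1 - ball_prob z s) ^ (j - 1)
      + indicator (cball z (t + s)) y
        * (exp (- (i * (t / DIM('a)) ^ DIM('a)) / 2) * exp (- (real (j - 1) * (s / DIM('a)) ^ DIM('a)) / 2))"
proof -
  interpret C: prob_space "cube_unif :: 'a measure" by (rule prob_space_cube_unif)
  define u where "u = measure cube_unif (cball y t \<union> cball z s)"
  define a where "a = ball_prob y t"
  define b where "b = ball_prob z s"
  have a: "0 \<le> a" "a \<le> u" and b: "0 \<le> b" "b \<le> u" and u: "u \<le> 1"
    unfolding a_def b_def u_def ball_prob_def by (auto intro: C.finite_measure_mono)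
  have j: "j - Suc i = (j - 1) - i" "i \<le> j - 1"
    using ij by auto
  have "indicator {w. s < dist z w} y * (1 - u) ^ i * (1 - b) ^ (j - Suc i) \<le> (1 - u) ^ i * (1 - b) ^ (j - Suc i)"
    using u b by (intro mult_right_mono) (auto simp: indicator_def)
  also have "\<dots> \<le> (1 - a) ^ i * (1 - b) ^ (j - 1)
      + indicator (cball z (t + s)) y
        * (exp (- (i * (t / DIM('a)) ^ DIM('a)) / 2) * exp (- (real (j - 1) * (s / DIM('a)) ^ DIM('a)) / 2))"
  proof (cases "t + s < dist y z")
    case True
    then have "cball y t \<inter> cball z s = {}"
      using dist_triangle[of y z] by (auto simp: dist_commute) (smt (verit) dist_triangle2)
    then have u_eq: "u = a + b"
      unfolding u_def a_def b_def ball_prob_def by (intro C.finite_measure_Union) auto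
    then have "(1 - u) ^ i * (1 - b) ^ (j - Suc i) \<le> (1 - a) ^ i * (1 - b) ^ (j - 1)"
      unfolding j(1) u_eq using a b u u_eq j(2) by (intro one_minus_disjoint_power_le) auto
    then show ?thesis
      by (intro add_increasing2) (auto simp: indicator_def)
  next
    case False
    then have "indicator (cball z (t + s)) y = (1::real)"
      by (simp add: dist_commute)
    have "(1 - u) ^ i * (1 - b) ^ (j - Suc i) \<le> sqrt ((1 - a) ^ i * (1 - b) ^ (j - 1))"
      unfolding j(1) using a b u j(2) by (intro one_minus_overlap_power_le) auto
    also have "\<dots> \<le> sqrt (exp (- (i * (t / DIM('a)) ^ DIM('a))) * exp (- (real (j - 1) * (s / DIM('a)) ^ DIM('a))))"
      unfolding a_def b_def using y z ts
      by (intro real_sqrt_le_mono mult_mono one_minus_ball_prob_power_le_exp) auto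
    finally show ?thesis
      using \<open>indicator (cball z (t + s)) y = 1\<close> a b u
      by (simp add: sqrt_exp_mult add_increasing)
  qed
  finally show ?thesis
    by (simp add: u_def a_def b_def)
qed

lemma nn_integral_joint_tail_integrand_le:
  fixes z :: "'a::euclidean_space"
  assumes z: "z \<in> cbox 0 One" and ij: "1 \<le> i" "i < j" and ts: "0 \<le> t" "0 \<le> s"
  defines "E \<equiv> exp (- (i * (t / DIM('a)) ^ DIM('a)) / 2) * exp (- (real (j - 1) * (s / DIM('a)) ^ DIM('a)) / 2)"
  shows "(\<integral>\<^sup>+y. ennreal (indicator {w. s < dist z w} y * (1 - measure cube_unif (cball y t \<union> cball z s)) ^ i
      * (1 - ball_prob z s) ^ (j - Suc i)) \<partial>cube_unif)
    \<le> ennreal (empty_ball_prob TYPE('a) i t) * ennreal ((1 - ball_prob z s) ^ (j - 1))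
      + ennreal E * ennreal (ball_prob z (t + s))"
proof -
  interpret C: prob_space "cube_unif :: 'a measure" by (rule prob_space_cube_unif)
  have E: "0 \<le> E" by (simp add: E_def)
  have [measurable]: "cball z (t + s) \<in> sets cube_unif"
    by simp
  have "(\<integral>\<^sup>+y. ennreal (indicator {w. s < dist z w} y * (1 - measure cube_unif (cball y t \<union> cball z s)) ^ i
      * (1 - ball_prob z s) ^ (j - Suc i)) \<partial>cube_unif)
    \<le> (\<integral>\<^sup>+y. ennreal ((1 - ball_prob (y::'a) t) ^ i) * ennreal ((1 - ball_prob z s) ^ (j - 1))
      + ennreal E * indicator (cball z (t + s)) y \<partial>cube_unif)"
  proof (rule nn_integral_mono_AE)
    show "AE y in cube_unif. ennreal (indicator {w. s < dist z w} y
        * (1 - measure cube_unif (cball y t \<union> cball z s)) ^ i * (1 - ball_prob z s) ^ (j - Suc i))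
      \<le> ennreal ((1 - ball_prob y t) ^ i) * ennreal ((1 - ball_prob z s) ^ (j - 1))
        + ennreal E * indicator (cball z (t + s)) y"
      using AE_cube_unif_cbox
    proof eventually_elim
      case (elim y)
      have "ennreal (indicator {w. s < dist z w} y
          * (1 - measure cube_unif (cball y t \<union> cball z s)) ^ i * (1 - ball_prob z s) ^ (j - Suc i))
        \<le> ennreal ((1 - ball_prob y t) ^ i * (1 - ball_prob z s) ^ (j - 1) + indicator (cball z (t + s)) y * E)"
        unfolding E_def by (intro ennreal_leI joint_tail_integrand_le[OF elim z ij ts])
      also have "\<dots> = ennreal ((1 - ball_prob y t) ^ i) * ennreal ((1 - ball_prob z s) ^ (j - 1))
          + ennreal E * indicator (cball z (t + s)) y"
        using E by (simp add: ennreal_plus ennreal_mult ennreal_indicator mult.commute)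
      finally show ?case .
    qed
  qed
  also have "\<dots> = (\<integral>\<^sup>+y. ennreal ((1 - ball_prob (y::'a) t) ^ i) * ennreal ((1 - ball_prob z s) ^ (j - 1)) \<partial>cube_unif)
      + (\<integral>\<^sup>+y. ennreal E * indicator (cball z (t + s)) y \<partial>cube_unif)"
    by (rule nn_integral_add) measurable
  also have "(\<integral>\<^sup>+y. ennreal ((1 - ball_prob (y::'a) t) ^ i) * ennreal ((1 - ball_prob z s) ^ (j - 1)) \<partial>cube_unif)
      = ennreal (empty_ball_prob TYPE('a) i t) * ennreal ((1 - ball_prob z s) ^ (j - 1))"
    by (subst nn_integral_multc) (simp_all add: nn_integral_eq_empty_ball_prob)
  also have "(\<integral>\<^sup>+y. ennreal E * indicator (cball z (t + s)) y \<partial>cube_unif) = ennreal E * ennreal (ball_prob z (t + s))"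
    by (simp add: nn_integral_cmult_indicator C.emeasure_eq_measure ball_prob_def)
  finally show ?thesis .
qed

lemma emeasure_ong_nn_dist_joint_greater_le:
  assumes ij: "1 \<le> i" "i < j" and ts: "0 \<le> t" "0 \<le> s"
  defines "P \<equiv> PiM {..j} (\<lambda>_. cube_unif :: 'a::euclidean_space measure)"
  shows "emeasure P {x \<in> space P. t < ong_nn_dist x i \<and> s < ong_nn_dist x j}
    \<le> ennreal (empty_ball_prob TYPE('a) i t * empty_ball_prob TYPE('a) (j - 1) s
      + exp (- (i * (t / DIM('a)) ^ DIM('a)) / 2) * exp (- (real (j - 1) * (s / DIM('a)) ^ DIM('a)) / 2)
        * (unit_ball_vol DIM('a) * (t + s) ^ DIM('a)))"
proof -
  interpret C: prob_space "cube_unif :: 'a measure" by (rule prob_space_cube_unif)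
  define E where "E = exp (- (i * (t / DIM('a)) ^ DIM('a)) / 2) * exp (- (real (j - 1) * (s / DIM('a)) ^ DIM('a)) / 2)"
  define B where "B = E * (unit_ball_vol DIM('a) * (t + s) ^ DIM('a))"
  have E: "0 \<le> E" by (simp add: E_def)
  have m: "(\<lambda>z. ennreal ((1 - ball_prob (z::'a) s) ^ (j - 1))) \<in> borel_measurable cube_unif"
    by measurable
  have "emeasure P {x \<in> space P. t < ong_nn_dist x i \<and> s < ong_nn_dist x j}
      = (\<integral>\<^sup>+z. \<integral>\<^sup>+y. ennreal (indicator {w. s < dist (z::'a) w} y
        * (1 - measure cube_unif (cball y t \<union> cball z s)) ^ i * (1 - ball_prob z s) ^ (j - Suc i))
      \<partial>cube_unif \<partial>cube_unif)"
    unfolding P_def by (rule emeasure_ong_nn_dist_joint_greater[OF ij])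
  also have "\<dots> \<le> (\<integral>\<^sup>+z. ennreal (empty_ball_prob TYPE('a) i t) * ennreal ((1 - ball_prob (z::'a) s) ^ (j - 1))
      + ennreal E * ennreal (ball_prob z (t + s)) \<partial>cube_unif)"
  proof (rule nn_integral_mono_AE)
    show "AE z in cube_unif. (\<integral>\<^sup>+y. ennreal (indicator {w. s < dist (z::'a) w} y
        * (1 - measure cube_unif (cball y t \<union> cball z s)) ^ i * (1 - ball_prob z s) ^ (j - Suc i)) \<partial>cube_unif)
      \<le> ennreal (empty_ball_prob TYPE('a) i t) * ennreal ((1 - ball_prob z s) ^ (j - 1))
        + ennreal E * ennreal (ball_prob z (t + s))"
      using AE_cube_unif_cbox
      by eventually_elim (unfold E_def, rule nn_integral_joint_tail_integrand_le[OF _ ij ts])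
  qed
  also have "\<dots> \<le> (\<integral>\<^sup>+z. ennreal (empty_ball_prob TYPE('a) i t) * ennreal ((1 - ball_prob (z::'a) s) ^ (j - 1))
      + ennreal B \<partial>cube_unif)"
    using E ts unfolding B_def
    by (intro nn_integral_mono add_left_mono)
       (auto simp: ennreal_mult[symmetric] ball_prob_nonneg intro!: ennreal_leI mult_left_mono ball_prob_le_ball_volume)
  also have "\<dots> = ennreal (empty_ball_prob TYPE('a) i t) * ennreal (empty_ball_prob TYPE('a) (j - 1) s) + ennreal B"
    using m C.emeasure_space_1
    by (subst nn_integral_add) (auto simp: nn_integral_cmult nn_integral_eq_empty_ball_prob)
  also have "\<dots> = ennreal (empty_ball_prob TYPE('a) i t * empty_ball_prob TYPE('a) (j - 1) s + B)"
    using E ts by (simp add: B_def ennreal_mult ennreal_plus empty_ball_prob_nonneg)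
  finally show ?thesis
    unfolding B_def E_def .
qed

lemma nn_integral_PiM_ong_nn_dist_powr_mult_le:
  assumes ij: "1 \<le> i" "i < j" and a: "a > 0"
  defines "D \<equiv> DIM('a::euclidean_space)"
  shows "(\<integral>\<^sup>+x. ennreal (ong_nn_dist x i powr a * ong_nn_dist x j powr a) \<partial>PiM {..j} (\<lambda>_. cube_unif :: 'a measure))
    \<le> ennreal (nn_dist_moment TYPE('a) a i * nn_dist_moment TYPE('a) a (j - 1)
      + cross_const a D * (real i powr (- 1 - a / D) * real (j - 1) powr (- (a / D))))"
proof -
  define P where "P = PiM {..j} (\<lambda>_. cube_unif :: 'a measure)"
  interpret P: prob_space P unfolding P_def by (rule prob_space_PiM_cube_unif)
  have D: "D > 0" by (simp add: D_def)
  define v where "v = unit_ball_vol D"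
  have v: "v \<ge> 0" by (simp add: v_def)
  define F where "F = (\<lambda>n t. powr_density a t * empty_ball_prob TYPE('a) n t)"
  define R where "R = (\<lambda>t s. powr_density a t * powr_density a s
    * (exp (- (i * (t / D) ^ D) / 2) * exp (- (real (j - 1) * (s / D) ^ D) / 2)) * (t + s) ^ D)"
  have [measurable]: "F n \<in> borel_measurable borel" for n
    unfolding F_def by measurable
  have "(\<integral>\<^sup>+x. ennreal (ong_nn_dist x i powr a * ong_nn_dist x j powr a) \<partial>P)
      = (\<integral>\<^sup>+t. \<integral>\<^sup>+s. ennreal (powr_density a t) * ennreal (powr_density a s)
        * emeasure P {x \<in> space P. t < ong_nn_dist x i \<and> s < ong_nn_dist x j} \<partial>lborel \<partial>lborel)"
    using ij a unfolding P_def
    by (intro nn_integral_powr_mult_eq_joint_tail P.sigma_finite_measure_axioms[unfolded P_def]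
        borel_measurable_ong_nn_dist ong_nn_dist_nonneg) auto
  also have "\<dots> \<le> (\<integral>\<^sup>+t. \<integral>\<^sup>+s. ennreal (F i t) * ennreal (F (j - 1) s) + ennreal v * ennreal (R t s)
      \<partial>lborel \<partial>lborel)"
  proof (intro nn_integral_mono)
    fix t s :: real
    show "ennreal (powr_density a t) * ennreal (powr_density a s)
        * emeasure P {x \<in> space P. t < ong_nn_dist x i \<and> s < ong_nn_dist x j}
      \<le> ennreal (F i t) * ennreal (F (j - 1) s) + ennreal v * ennreal (R t s)"
    proof (cases "t > 0 \<and> s > 0")
      case True
      then have "ennreal (powr_density a t) * ennreal (powr_density a s)
          * emeasure P {x \<in> space P. t < ong_nn_dist x i \<and> s < ong_nn_dist x j}
        \<le> ennreal (powr_density a t) * ennreal (powr_density a s)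
          * ennreal (empty_ball_prob TYPE('a) i t * empty_ball_prob TYPE('a) (j - 1) s
            + exp (- (i * (t / D) ^ D) / 2) * exp (- (real (j - 1) * (s / D) ^ D) / 2) * (v * (t + s) ^ D))"
        unfolding P_def D_def v_def
        by (intro mult_left_mono emeasure_ong_nn_dist_joint_greater_le[OF ij]) auto
      also have "\<dots> = ennreal (F i t) * ennreal (F (j - 1) s) + ennreal v * ennreal (R t s)"
        using True a v
        by (simp add: F_def R_def ennreal_mult[symmetric] ennreal_plus[symmetric] powr_density_nonneg
            empty_ball_prob_nonneg algebra_simps del: ennreal_plus)
      finally show ?thesis .
    qed (auto simp: powr_density_def)
  qed
  also have "\<dots> = ennreal (nn_dist_moment TYPE('a) a i) * ennreal (nn_dist_moment TYPE('a) a (j - 1))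
      + ennreal v * (\<integral>\<^sup>+t. \<integral>\<^sup>+s. ennreal (R t s) \<partial>lborel \<partial>lborel)"
    using ij a unfolding F_def
    by (subst nn_integral_lborel_product_add) (auto simp: R_def nn_integral_eq_nn_dist_moment)
  also have "\<dots> \<le> ennreal (nn_dist_moment TYPE('a) a i) * ennreal (nn_dist_moment TYPE('a) a (j - 1))
      + ennreal (cross_const a D * (real i powr (- 1 - a / D) * real (j - 1) powr (- (a / D))))"
    using nn_integral_overlap_le_cross_const[OF a D, of i "j - 1"] ij
    unfolding R_def v_def by (intro add_left_mono) auto
  also have "\<dots> = ennreal (nn_dist_moment TYPE('a) a i * nn_dist_moment TYPE('a) a (j - 1)
      + cross_const a D * (real i powr (- 1 - a / D) * real (j - 1) powr (- (a / D))))"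
    using a D by (simp add: ennreal_mult ennreal_plus nn_dist_moment_nonneg cross_const_nonneg)
  finally show ?thesis
    unfolding P_def .
qed

section \<open>The total weight of the graph\<close>

definition edge_powr :: "(nat \<Rightarrow> 'b \<Rightarrow> 'a::metric_space) \<Rightarrow> real \<Rightarrow> nat \<Rightarrow> 'b \<Rightarrow> real" where
  "edge_powr U a i \<omega> = ong_nn_dist (\<lambda>k. U k \<omega>) i powr a"

lemma edge_powr_nonneg: "0 \<le> edge_powr U a i \<omega>"
  by (simp add: edge_powr_def)

lemma edge_powr_square: "edge_powr U a i \<omega> ^ 2 = edge_powr U (2 * a) i \<omega>"
  by (simp add: edge_powr_def power2_eq_square powr_add[symmetric])

lemma ong_weight_eq_sum_edge_powr:
  "a \<noteq> 0 \<Longrightarrow> ong_weight a (\<lambda>i. U i \<omega>) n = (\<Sum>i\<in>{1..<n}. edge_powr U a i \<omega>)"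
  unfolding ong_weight_def edge_powr_def pow_weight_def by (intro sum.cong) auto

lemma ong_weight_0: "ong_weight 0 x n = real (n - 1)"
proof -
  have "ong_weight 0 x n = (\<Sum>i\<in>{1..<n}. 1)"
    unfolding ong_weight_def pow_weight_def by (intro sum.cong) auto
  then show ?thesis by simp
qed

lemma ong_weight_0_rescaled_tendsto:
  fixes d :: nat
  assumes "d > 0"
  shows "(\<lambda>n. \<bar>real n powr ((0 - real d) / d) * ong_weight 0 x n - 1\<bar>) \<longlonglongrightarrow> 0"
proof -
  have "\<forall>\<^sub>F n in sequentially. 1 / real n = \<bar>real n powr ((0 - real d) / d) * ong_weight 0 x n - 1\<bar>"
  proof (rule eventually_sequentiallyI[of 1])
    fix n :: nat assume n: "n \<ge> 1"
    then have "real n powr ((0 - real d) / d) = 1 / real n"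
      using assms by (simp add: powr_minus_divide)
    then show "1 / real n = \<bar>real n powr ((0 - real d) / d) * ong_weight 0 x n - 1\<bar>"
      using n by (simp add: ong_weight_0 of_nat_diff field_simps)
  qed
  then show ?thesis
    by (rule Lim_transform_eventually[OF lim_inverse_n'])
qed

definition second_moment_const :: "real \<Rightarrow> nat \<Rightarrow> real" where
  "second_moment_const a D = 2 * cross_const a D * (\<Sum>n. real n powr (- 1 - a / D)) * 2 powr (a / D)
    + gamma_moment (2 * a) D 0 (1 / D ^ D)"

lemma second_moment_const_nonneg:
  assumes "0 < a" "a < D"
  shows "0 \<le> second_moment_const a D"
proof -
  have "summable (\<lambda>n. real n powr (- 1 - a / D))"
    using assms by (subst summable_real_powr_iff) auto
  then have "0 \<le> (\<Sum>n. real n powr (- 1 - a / D))"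
    by (rule suminf_nonneg) auto
  then show ?thesis
    using assms unfolding second_moment_const_def
    by (intro add_nonneg_nonneg mult_nonneg_nonneg cross_const_nonneg gamma_moment_nonneg) auto
qed

locale iid_uniform_cube = prob_space M for M :: "'b measure" +
  fixes U :: "nat \<Rightarrow> 'b \<Rightarrow> 'a::euclidean_space"
  assumes indep_U: "indep_vars (\<lambda>_. borel) U UNIV"
    and distr_U: "\<And>i. distr M borel (U i) = cube_unif"
begin

lemma borel_measurable_U[measurable]: "U i \<in> borel_measurable M"
  using indep_U unfolding indep_vars_def by auto

lemma borel_measurable_edge_powr[measurable]: "edge_powr U a i \<in> borel_measurable M"
  unfolding edge_powr_def ong_nn_dist_def by measurable

lemma nn_integral_eq_PiM:
  assumes I: "finite I" "I \<noteq> {}"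
    and f: "f \<in> borel_measurable (PiM I (\<lambda>_. cube_unif :: 'a measure))"
  shows "(\<integral>\<^sup>+\<omega>. f (\<lambda>k\<in>I. U k \<omega>) \<partial>M) = (\<integral>\<^sup>+x. f x \<partial>PiM I (\<lambda>_. cube_unif))"
proof -
  have "indep_vars (\<lambda>_. borel) U I"
    by (rule indep_vars_subset[OF indep_U]) auto
  then have "distr M (PiM I (\<lambda>_. borel)) (\<lambda>x. \<lambda>i\<in>I. U i x) = PiM I (\<lambda>i. distr M borel (U i))"
    using indep_vars_iff_distr_eq_PiM[where I=I and M'="\<lambda>_. borel" and X=U] I(2) by simp
  then have D: "distr M (PiM I (\<lambda>_. borel)) (\<lambda>x. \<lambda>i\<in>I. U i x) = PiM I (\<lambda>_. cube_unif)"
    by (simp add: distr_U)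
  have "sets (PiM I (\<lambda>_. cube_unif)) = sets (PiM I (\<lambda>_. borel :: 'a measure))"
    by (intro sets_PiM_cong) auto
  then have "f \<in> borel_measurable (PiM I (\<lambda>_. borel))"
    using f measurable_cong_sets[OF _ refl] by blast
  then show ?thesis
    unfolding D[symmetric] by (subst nn_integral_distr) auto
qed

lemma nn_integral_edge_powr:
  assumes i: "i \<ge> 1" and a: "a > 0"
  shows "(\<integral>\<^sup>+\<omega>. ennreal (edge_powr U a i \<omega>) \<partial>M) = ennreal (nn_dist_moment TYPE('a) a i)"
proof -
  have "ong_nn_dist (\<lambda>k\<in>{..i}. U k \<omega>) i = ong_nn_dist (\<lambda>k. U k \<omega>) i" for \<omega>
    by (intro ong_nn_dist_restrict) auto
  then have "(\<integral>\<^sup>+\<omega>. ennreal (edge_powr U a i \<omega>) \<partial>M)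
      = (\<integral>\<^sup>+\<omega>. ennreal (ong_nn_dist (\<lambda>k\<in>{..i}. U k \<omega>) i powr a) \<partial>M)"
    by (simp add: edge_powr_def)
  also have "\<dots> = (\<integral>\<^sup>+x. ennreal (ong_nn_dist x i powr a) \<partial>PiM {..i} (\<lambda>_. cube_unif :: 'a measure))"
  proof (rule nn_integral_eq_PiM)
    have [measurable]: "(\<lambda>x. ong_nn_dist x i) \<in> borel_measurable (PiM {..i} (\<lambda>_. cube_unif :: 'a measure))"
      by (intro borel_measurable_ong_nn_dist) auto
    show "(\<lambda>x. ennreal (ong_nn_dist x i powr a)) \<in> borel_measurable (PiM {..i} (\<lambda>_. cube_unif :: 'a measure))"
      by measurable
  qed auto
  also have "\<dots> = ennreal (nn_dist_moment TYPE('a) a i)"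
    by (rule nn_integral_PiM_ong_nn_dist_powr[OF i a])
  finally show ?thesis .
qed

lemma integrable_edge_powr:
  assumes "i \<ge> 1" "a > 0"
  shows "integrable M (edge_powr U a i)"
  using nn_integral_edge_powr[OF assms]
  by (intro integrableI_nn_integral_finite) (auto simp: edge_powr_nonneg)

lemma expectation_edge_powr:
  assumes "i \<ge> 1" "a > 0"
  shows "expectation (edge_powr U a i) = nn_dist_moment TYPE('a) a i"
  using nn_integral_edge_powr[OF assms] assms
  by (subst integral_eq_nn_integral) (auto simp: edge_powr_nonneg nn_dist_moment_nonneg)

lemma nn_integral_edge_powr_mult_le:
  assumes ij: "1 \<le> i" "i < j" and a: "a > 0"
  shows "(\<integral>\<^sup>+\<omega>. ennreal (edge_powr U a i \<omega> * edge_powr U a j \<omega>) \<partial>M)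
    \<le> ennreal (nn_dist_moment TYPE('a) a i * nn_dist_moment TYPE('a) a (j - 1)
      + cross_const a DIM('a) * (real i powr (- 1 - a / DIM('a)) * real (j - 1) powr (- (a / DIM('a)))))"
proof -
  have "ong_nn_dist (\<lambda>k\<in>{..j}. U k \<omega>) l = ong_nn_dist (\<lambda>k. U k \<omega>) l" if "l \<le> j" for \<omega> l
    using that by (intro ong_nn_dist_restrict) auto
  then have "(\<integral>\<^sup>+\<omega>. ennreal (edge_powr U a i \<omega> * edge_powr U a j \<omega>) \<partial>M)
      = (\<integral>\<^sup>+\<omega>. ennreal (ong_nn_dist (\<lambda>k\<in>{..j}. U k \<omega>) i powr a * ong_nn_dist (\<lambda>k\<in>{..j}. U k \<omega>) j powr a) \<partial>M)"
    using ij by (simp add: edge_powr_def)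
  also have "\<dots> = (\<integral>\<^sup>+x. ennreal (ong_nn_dist x i powr a * ong_nn_dist x j powr a)
      \<partial>PiM {..j} (\<lambda>_. cube_unif :: 'a measure))"
  proof (rule nn_integral_eq_PiM)
    have [measurable]: "(\<lambda>x. ong_nn_dist x i) \<in> borel_measurable (PiM {..j} (\<lambda>_. cube_unif :: 'a measure))"
      "(\<lambda>x. ong_nn_dist x j) \<in> borel_measurable (PiM {..j} (\<lambda>_. cube_unif :: 'a measure))"
      using ij by (auto intro!: borel_measurable_ong_nn_dist)
    show "(\<lambda>x. ennreal (ong_nn_dist x i powr a * ong_nn_dist x j powr a))
        \<in> borel_measurable (PiM {..j} (\<lambda>_. cube_unif :: 'a measure))"
      using ij by measurable
  qed auto
  also have "\<dots> \<le> ennreal (nn_dist_moment TYPE('a) a i * nn_dist_moment TYPE('a) a (j - 1)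
      + cross_const a DIM('a) * (real i powr (- 1 - a / DIM('a)) * real (j - 1) powr (- (a / DIM('a)))))"
    by (rule nn_integral_PiM_ong_nn_dist_powr_mult_le[OF ij a])
  finally show ?thesis .
qed

lemma integrable_edge_powr_mult_less:
  assumes ij: "1 \<le> i" "i < j" and a: "a > 0"
  shows "integrable M (\<lambda>\<omega>. edge_powr U a i \<omega> * edge_powr U a j \<omega>)"
    and "expectation (\<lambda>\<omega>. edge_powr U a i \<omega> * edge_powr U a j \<omega>)
      \<le> nn_dist_moment TYPE('a) a i * nn_dist_moment TYPE('a) a (j - 1)
        + cross_const a DIM('a) * (real i powr (- 1 - a / DIM('a)) * real (j - 1) powr (- (a / DIM('a))))"
proof -
  note le = nn_integral_edge_powr_mult_le[OF ij a]
  show "integrable M (\<lambda>\<omega>. edge_powr U a i \<omega> * edge_powr U a j \<omega>)"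
    using le by (intro integrableI_nonneg) (auto simp: edge_powr_nonneg intro: le_less_trans)
  have "0 \<le> nn_dist_moment TYPE('a) a i * nn_dist_moment TYPE('a) a (j - 1)
      + cross_const a DIM('a) * (real i powr (- 1 - a / DIM('a)) * real (j - 1) powr (- (a / DIM('a))))"
    using a by (intro add_nonneg_nonneg mult_nonneg_nonneg nn_dist_moment_nonneg cross_const_nonneg) auto
  then show "expectation (\<lambda>\<omega>. edge_powr U a i \<omega> * edge_powr U a j \<omega>)
      \<le> nn_dist_moment TYPE('a) a i * nn_dist_moment TYPE('a) a (j - 1)
        + cross_const a DIM('a) * (real i powr (- 1 - a / DIM('a)) * real (j - 1) powr (- (a / DIM('a))))"
    using le by (subst integral_eq_nn_integral) (auto simp: edge_powr_nonneg intro: enn2real_leI)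
qed

lemma integrable_edge_powr_mult:
  assumes "i \<ge> 1" "j \<ge> 1" "a > 0"
  shows "integrable M (\<lambda>\<omega>. edge_powr U a i \<omega> * edge_powr U a j \<omega>)"
proof (cases i j rule: linorder_cases)
  case less then show ?thesis using integrable_edge_powr_mult_less(1) assms by simp
next
  case equal
  have "(\<lambda>\<omega>. edge_powr U a i \<omega> * edge_powr U a i \<omega>) = edge_powr U (2 * a) i"
    by (simp add: fun_eq_iff edge_powr_square[symmetric] power2_eq_square)
  then show ?thesis
    using integrable_edge_powr[of i "2 * a"] assms equal by simp
next
  case greater then show ?thesis
    using integrable_edge_powr_mult_less(1)[of j i] assms by (simp add: mult.commute)
qed

lemma integrable_ong_weight:
  assumes "a > 0"
  shows "integrable M (\<lambda>\<omega>. ong_weight a (\<lambda>i. U i \<omega>) n)"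
  using assms unfolding ong_weight_eq_sum_edge_powr[OF less_imp_neq[OF assms, symmetric]]
  by (intro Bochner_Integration.integrable_sum integrable_edge_powr) auto

lemma expectation_ong_weight:
  assumes "a > 0"
  shows "expectation (\<lambda>\<omega>. ong_weight a (\<lambda>i. U i \<omega>) n) = (\<Sum>i\<in>{1..<n}. nn_dist_moment TYPE('a) a i)"
  using assms
  by (simp add: ong_weight_eq_sum_edge_powr integrable_edge_powr expectation_edge_powr)

lemma integrable_ong_weight_mult_edge_powr:
  assumes "a > 0" "n \<ge> 1"
  shows "integrable M (\<lambda>\<omega>. ong_weight a (\<lambda>i. U i \<omega>) N * edge_powr U a n \<omega>)"
  using assms unfolding ong_weight_eq_sum_edge_powr[OF less_imp_neq[OF assms(1), symmetric]] sum_distrib_right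
  by (intro Bochner_Integration.integrable_sum integrable_edge_powr_mult) auto

lemma integrable_ong_weight_square:
  assumes "a > 0"
  shows "integrable M (\<lambda>\<omega>. ong_weight a (\<lambda>i. U i \<omega>) n ^ 2)"
  using assms unfolding power2_eq_square
  by (subst (2) ong_weight_eq_sum_edge_powr, simp, unfold sum_distrib_left)
     (auto intro!: Bochner_Integration.integrable_sum integrable_ong_weight_mult_edge_powr)

context
  fixes \<alpha> :: real
  assumes \<alpha>: "0 < \<alpha>" "\<alpha> < DIM('a)"
begin

lemma expectation_ong_weight_mult_edge_powr_le:
  assumes N: "N \<ge> 1"
  defines "b \<equiv> \<alpha> / DIM('a)"
  shows "expectation (\<lambda>\<omega>. ong_weight \<alpha> (\<lambda>i. U i \<omega>) N * edge_powr U \<alpha> N \<omega>)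
    \<le> (\<Sum>i\<in>{1..<N}. nn_dist_moment TYPE('a) \<alpha> i) * nn_dist_moment TYPE('a) \<alpha> (N - 1)
      + cross_const \<alpha> DIM('a) * (\<Sum>n. real n powr (- 1 - b)) * 2 powr b * real N powr (- b)"
proof -
  have b: "0 < b" "b < 1" using \<alpha> by (auto simp: b_def field_simps)
  define Z where "Z = (\<Sum>n. real n powr (- 1 - b))"
  have Z: "summable (\<lambda>n. real n powr (- 1 - b))"
    using b by (subst summable_real_powr_iff) auto
  have K: "0 \<le> cross_const \<alpha> DIM('a)"
    using \<alpha> by (intro cross_const_nonneg) auto
  have "expectation (\<lambda>\<omega>. ong_weight \<alpha> (\<lambda>i. U i \<omega>) N * edge_powr U \<alpha> N \<omega>)
      = (\<Sum>i\<in>{1..<N}. expectation (\<lambda>\<omega>. edge_powr U \<alpha> i \<omega> * edge_powr U \<alpha> N \<omega>))"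
    using \<alpha> unfolding ong_weight_eq_sum_edge_powr[OF less_imp_neq[OF \<alpha>(1), symmetric]] sum_distrib_right
    by (intro Bochner_Integration.integral_sum integrable_edge_powr_mult) auto
  also have "\<dots> \<le> (\<Sum>i\<in>{1..<N}. nn_dist_moment TYPE('a) \<alpha> i * nn_dist_moment TYPE('a) \<alpha> (N - 1)
      + cross_const \<alpha> DIM('a) * (real i powr (- 1 - b) * real (N - 1) powr (- b)))"
  proof (intro sum_mono)
    fix i assume "i \<in> {1..<N}"
    then show "expectation (\<lambda>\<omega>. edge_powr U \<alpha> i \<omega> * edge_powr U \<alpha> N \<omega>)
        \<le> nn_dist_moment TYPE('a) \<alpha> i * nn_dist_moment TYPE('a) \<alpha> (N - 1)
          + cross_const \<alpha> DIM('a) * (real i powr (- 1 - b) * real (N - 1) powr (- b))"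
      using integrable_edge_powr_mult_less(2)[of i N \<alpha>] \<alpha> by (simp add: b_def)
  qed
  also have "\<dots> = (\<Sum>i\<in>{1..<N}. nn_dist_moment TYPE('a) \<alpha> i) * nn_dist_moment TYPE('a) \<alpha> (N - 1)
      + cross_const \<alpha> DIM('a) * real (N - 1) powr (- b) * (\<Sum>i\<in>{1..<N}. real i powr (- 1 - b))"
    by (simp add: sum.distrib sum_distrib_left sum_distrib_right mult_ac)
  also have "\<dots> \<le> (\<Sum>i\<in>{1..<N}. nn_dist_moment TYPE('a) \<alpha> i) * nn_dist_moment TYPE('a) \<alpha> (N - 1)
      + cross_const \<alpha> DIM('a) * (2 powr b * real N powr (- b)) * Z"
  proof (intro add_left_mono mult_mono mult_left_mono)
    show "(\<Sum>i\<in>{1..<N}. real i powr (- 1 - b)) \<le> Z"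
      unfolding Z_def by (rule sum_le_suminf[OF Z]) auto
    show "real (N - 1) powr (- b) \<le> 2 powr b * real N powr (- b)"
      using N b by (intro powr_neg_pred_le) auto
  qed (use K Z in \<open>auto intro: suminf_nonneg sum_nonneg simp: Z_def\<close>)
  finally show ?thesis by (simp add: Z_def mult_ac)
qed

lemma expectation_edge_powr_square_le:
  assumes N: "N \<ge> 1"
  shows "expectation (\<lambda>\<omega>. edge_powr U \<alpha> N \<omega> ^ 2)
    \<le> gamma_moment (2 * \<alpha>) DIM('a) 0 (1 / DIM('a) ^ DIM('a)) * real N powr (- (\<alpha> / DIM('a)))"
proof -
  have "expectation (\<lambda>\<omega>. edge_powr U \<alpha> N \<omega> ^ 2) = nn_dist_moment TYPE('a) (2 * \<alpha>) N"
    using N \<alpha> by (simp add: edge_powr_square expectation_edge_powr)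
  also have "\<dots> \<le> gamma_moment (2 * \<alpha>) DIM('a) 0 (1 / DIM('a) ^ DIM('a)) * real N powr (- (2 * \<alpha> / DIM('a)))"
    using nn_dist_moment_le_powr[of "2 * \<alpha>" N] N \<alpha> by simp
  also have "\<dots> \<le> gamma_moment (2 * \<alpha>) DIM('a) 0 (1 / DIM('a) ^ DIM('a)) * real N powr (- (\<alpha> / DIM('a)))"
    using N \<alpha> by (intro mult_left_mono powr_mono gamma_moment_nonneg) (auto simp: field_simps)
  finally show ?thesis .
qed

lemma second_moment_ong_weight_step:
  assumes N: "N \<ge> 1"
  shows "expectation (\<lambda>\<omega>. ong_weight \<alpha> (\<lambda>i. U i \<omega>) (Suc N) ^ 2)
    \<le> expectation (\<lambda>\<omega>. ong_weight \<alpha> (\<lambda>i. U i \<omega>) N ^ 2)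
      + 2 * ((\<Sum>i\<in>{1..<N}. nn_dist_moment TYPE('a) \<alpha> i) * nn_dist_moment TYPE('a) \<alpha> (N - 1))
      + second_moment_const \<alpha> DIM('a) * real N powr (- (\<alpha> / DIM('a)))"
proof -
  define W where "W = (\<lambda>n \<omega>. ong_weight \<alpha> (\<lambda>i. U i \<omega>) n)"
  have W_Suc: "W (Suc N) \<omega> = W N \<omega> + edge_powr U \<alpha> N \<omega>" for \<omega>
    using N \<alpha> by (simp add: W_def ong_weight_eq_sum_edge_powr)
  have "(\<lambda>\<omega>. W (Suc N) \<omega> ^ 2)
      = (\<lambda>\<omega>. W N \<omega> ^ 2 + 2 * (W N \<omega> * edge_powr U \<alpha> N \<omega>) + edge_powr U \<alpha> N \<omega> ^ 2)"
    by (simp add: fun_eq_iff W_Suc power2_eq_square algebra_simps)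
  then have "expectation (\<lambda>\<omega>. W (Suc N) \<omega> ^ 2) = expectation (\<lambda>\<omega>. W N \<omega> ^ 2)
      + 2 * expectation (\<lambda>\<omega>. W N \<omega> * edge_powr U \<alpha> N \<omega>) + expectation (\<lambda>\<omega>. edge_powr U \<alpha> N \<omega> ^ 2)"
    using integrable_ong_weight_square[of \<alpha>] integrable_ong_weight_mult_edge_powr[of \<alpha> N]
      integrable_edge_powr[of N "2 * \<alpha>"] N \<alpha>
    by (simp add: W_def edge_powr_square)
  then show ?thesis
    using expectation_ong_weight_mult_edge_powr_le[OF N] expectation_edge_powr_square_le[OF N]
    unfolding W_def second_moment_const_def by (simp add: algebra_simps)
qed

(* The term nn_dist_moment 1 - nn_dist_moment (N - 1) absorbs the mismatch between the
   factor E R_(N-1)^alpha in the cross-moment bound and the increment E R_N^alpha of the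
   mean; it telescopes because the moments decrease. *)
lemma second_moment_ong_weight_le:
  assumes N: "N \<ge> 1"
  shows "expectation (\<lambda>\<omega>. ong_weight \<alpha> (\<lambda>i. U i \<omega>) N ^ 2)
    \<le> (\<Sum>i\<in>{1..<N}. nn_dist_moment TYPE('a) \<alpha> i) ^ 2
      + 2 * (\<Sum>i\<in>{1..<N}. nn_dist_moment TYPE('a) \<alpha> i)
        * (nn_dist_moment TYPE('a) \<alpha> 1 - nn_dist_moment TYPE('a) \<alpha> (N - 1))
      + second_moment_const \<alpha> DIM('a) * (\<Sum>n\<in>{1..<N}. real n powr (- (\<alpha> / DIM('a))))"
  using N
proof (induction N rule: dec_induct)
  case base
  then show ?case by (simp add: ong_weight_0 ong_weight_def)
next
  case (step N)
  define A where "A = (\<Sum>i\<in>{1..<N}. nn_dist_moment TYPE('a) \<alpha> i)"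
  define m where "m = nn_dist_moment TYPE('a) \<alpha>"
  define s where "s = (\<Sum>n\<in>{1..<N}. real n powr (- (\<alpha> / DIM('a))))"
  define T where "T = second_moment_const \<alpha> DIM('a)"
  have A: "(\<Sum>i\<in>{1..<Suc N}. nn_dist_moment TYPE('a) \<alpha> i) = A + m N"
    and s: "(\<Sum>n\<in>{1..<Suc N}. real n powr (- (\<alpha> / DIM('a)))) = s + real N powr (- (\<alpha> / DIM('a)))"
    using step.hyps by (simp_all add: A_def m_def s_def)
  have m: "0 \<le> m N" "m N \<le> m 1"
    using \<alpha> step.hyps by (auto simp: m_def nn_dist_moment_nonneg intro: nn_dist_moment_antimono)
  have "expectation (\<lambda>\<omega>. ong_weight \<alpha> (\<lambda>i. U i \<omega>) (Suc N) ^ 2)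
      \<le> expectation (\<lambda>\<omega>. ong_weight \<alpha> (\<lambda>i. U i \<omega>) N ^ 2) + 2 * (A * m (N - 1))
        + T * real N powr (- (\<alpha> / DIM('a)))"
    using second_moment_ong_weight_step[OF step.hyps(1)] by (simp add: A_def m_def T_def)
  also have "\<dots> \<le> A ^ 2 + 2 * A * (m 1 - m (N - 1)) + T * s + 2 * (A * m (N - 1))
      + T * real N powr (- (\<alpha> / DIM('a)))"
    using step.IH by (simp add: A_def m_def s_def T_def)
  also have "\<dots> = A ^ 2 + 2 * A * m 1 + T * (s + real N powr (- (\<alpha> / DIM('a))))"
    by (simp add: algebra_simps)
  also have "\<dots> \<le> (A + m N) ^ 2 + 2 * (A + m N) * (m 1 - m N) + T * (s + real N powr (- (\<alpha> / DIM('a))))"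
    using m by (simp add: power2_eq_square algebra_simps mult_left_mono)
  finally show ?case
    unfolding A s by (simp add: m_def T_def)
qed

lemma second_moment_ong_weight_le_powr:
  assumes N: "N \<ge> 1"
  defines "b \<equiv> \<alpha> / DIM('a)"
  defines "C \<equiv> (2 * gamma_moment \<alpha> DIM('a) 0 (1 / DIM('a) ^ DIM('a)) * nn_dist_moment TYPE('a) \<alpha> 1
    + second_moment_const \<alpha> DIM('a)) / (1 - b)"
  shows "expectation (\<lambda>\<omega>. ong_weight \<alpha> (\<lambda>i. U i \<omega>) N ^ 2)
    \<le> (\<Sum>i\<in>{1..<N}. nn_dist_moment TYPE('a) \<alpha> i) ^ 2 + C * real N powr (1 - b)"
proof -
  have b: "0 < b" "b < 1" using \<alpha> by (auto simp: b_def field_simps)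
  define A where "A = (\<Sum>i\<in>{1..<N}. nn_dist_moment TYPE('a) \<alpha> i)"
  define s where "s = (\<Sum>n\<in>{1..<N}. real n powr (- b))"
  define G0 where "G0 = gamma_moment \<alpha> DIM('a) 0 (1 / DIM('a) ^ DIM('a))"
  define m1 where "m1 = nn_dist_moment TYPE('a) \<alpha> 1"
  define T where "T = second_moment_const \<alpha> DIM('a)"
  have G0: "0 \<le> G0" unfolding G0_def using \<alpha> by (intro gamma_moment_nonneg) auto
  have m1: "0 \<le> m1" using \<alpha> by (simp add: m1_def nn_dist_moment_nonneg)
  have T: "0 \<le> T" unfolding T_def using \<alpha> by (intro second_moment_const_nonneg) auto
  have "A \<le> (\<Sum>i\<in>{1..<N}. G0 * real i powr (- b))"
    unfolding A_def G0_def b_def using \<alpha> by (intro sum_mono nn_dist_moment_le_powr) auto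
  then have A: "0 \<le> A" "A \<le> G0 * s"
    unfolding A_def s_def sum_distrib_left using \<alpha>
    by (auto intro!: sum_nonneg simp: nn_dist_moment_nonneg)
  have "s \<le> (\<Sum>k=1..N. real k powr (- b))"
    unfolding s_def by (intro sum_mono2) auto
  also have "\<dots> \<le> real N powr (1 - b) / (1 - b)"
    by (rule sum_powr_neg_le[OF b])
  finally have s: "s \<le> real N powr (1 - b) / (1 - b)" .
  have "A * (m1 - nn_dist_moment TYPE('a) \<alpha> (N - 1)) \<le> A * m1"
    using A \<alpha> nn_dist_moment_nonneg[of \<alpha> "N - 1"] by (intro mult_left_mono) auto
  also have "\<dots> \<le> G0 * s * m1"
    using A m1 by (intro mult_right_mono) auto
  finally have "expectation (\<lambda>\<omega>. ong_weight \<alpha> (\<lambda>i. U i \<omega>) N ^ 2) \<le> A ^ 2 + (2 * G0 * m1 + T) * s"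
    using second_moment_ong_weight_le[OF N] by (simp add: A_def m1_def s_def b_def T_def algebra_simps)
  also have "\<dots> \<le> A ^ 2 + (2 * G0 * m1 + T) * (real N powr (1 - b) / (1 - b))"
    using G0 m1 T s by (intro add_left_mono mult_left_mono) auto
  finally show ?thesis
    by (simp add: A_def C_def G0_def m1_def T_def)
qed

lemma normalized_second_moment_le:
  fixes c :: real
  assumes N: "N \<ge> 1"
  defines "b \<equiv> \<alpha> / DIM('a)"
  defines "C \<equiv> (2 * gamma_moment \<alpha> DIM('a) 0 (1 / DIM('a) ^ DIM('a)) * nn_dist_moment TYPE('a) \<alpha> 1
    + second_moment_const \<alpha> DIM('a)) / (1 - b)"
  shows "expectation (\<lambda>\<omega>. (real N powr (b - 1) * ong_weight \<alpha> (\<lambda>i. U i \<omega>) N - c) ^ 2)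
    \<le> (real N powr (b - 1) * (\<Sum>i\<in>{1..<N}. nn_dist_moment TYPE('a) \<alpha> i) - c) ^ 2 + C * real N powr (b - 1)"
proof -
  define A where "A = (\<Sum>i\<in>{1..<N}. nn_dist_moment TYPE('a) \<alpha> i)"
  define x where "x = real N powr (b - 1)"
  have "(\<lambda>\<omega>. (x * ong_weight \<alpha> (\<lambda>i. U i \<omega>) N - c) ^ 2)
      = (\<lambda>\<omega>. x ^ 2 * ong_weight \<alpha> (\<lambda>i. U i \<omega>) N ^ 2 - 2 * c * x * ong_weight \<alpha> (\<lambda>i. U i \<omega>) N + c ^ 2)"
    by (simp add: fun_eq_iff power2_eq_square algebra_simps)
  then have "expectation (\<lambda>\<omega>. (x * ong_weight \<alpha> (\<lambda>i. U i \<omega>) N - c) ^ 2)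
      = x ^ 2 * expectation (\<lambda>\<omega>. ong_weight \<alpha> (\<lambda>i. U i \<omega>) N ^ 2) - 2 * c * x * A + c ^ 2"
    using integrable_ong_weight_square[of \<alpha> N] integrable_ong_weight[of \<alpha> N] \<alpha>
    by (simp add: prob_space expectation_ong_weight A_def)
  also have "\<dots> \<le> x ^ 2 * (A ^ 2 + C * real N powr (1 - b)) - 2 * c * x * A + c ^ 2"
    using second_moment_ong_weight_le_powr[OF N] unfolding A_def C_def b_def
    by (intro add_right_mono diff_right_mono mult_left_mono) auto
  also have "x ^ 2 * real N powr (1 - b) = real N powr (b - 1)"
    using N unfolding x_def by (simp add: power2_eq_square powr_add[symmetric])
  then have "x ^ 2 * (A ^ 2 + C * real N powr (1 - b)) - 2 * c * x * A + c ^ 2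
      = (x * A - c) ^ 2 + C * real N powr (b - 1)"
    by (simp add: power2_eq_square algebra_simps)
  finally show ?thesis
    unfolding x_def A_def .
qed

lemma ong_weight_L2_tendsto:
  defines "b \<equiv> \<alpha> / DIM('a)"
  defines "c \<equiv> Gamma (1 + b) * unit_ball_vol DIM('a) powr (- b) / (1 - b)"
  shows "(\<lambda>N. expectation (\<lambda>\<omega>. (real N powr (b - 1) * ong_weight \<alpha> (\<lambda>i. U i \<omega>) N - c) ^ 2)) \<longlonglongrightarrow> 0"
proof -
  have b: "0 < b" "b < 1" using \<alpha> by (auto simp: b_def field_simps)
  define A where "A = (\<lambda>N. \<Sum>i\<in>{1..<N}. nn_dist_moment TYPE('a) \<alpha> i)"
  define Y where "Y = (\<lambda>N. expectation (\<lambda>\<omega>. (real N powr (b - 1) * ong_weight \<alpha> (\<lambda>i. U i \<omega>) N - c) ^ 2))"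
  define C where "C = (2 * gamma_moment \<alpha> DIM('a) 0 (1 / DIM('a) ^ DIM('a)) * nn_dist_moment TYPE('a) \<alpha> 1
    + second_moment_const \<alpha> DIM('a)) / (1 - b)"
  have C: "Y N \<le> (real N powr (b - 1) * A N - c) ^ 2 + C * real N powr (b - 1)" if "N \<ge> 1" for N
    using normalized_second_moment_le[OF that, of c] unfolding Y_def A_def C_def b_def by simp
  have "(\<lambda>k. real k powr b * nn_dist_moment TYPE('a) \<alpha> k) \<longlonglongrightarrow> Gamma (1 + b) * unit_ball_vol DIM('a) powr (- b)"
    using nn_dist_moment_asymptotics[OF \<alpha>(1), where 'a='a] by (simp add: b_def)
  then have "(\<lambda>N. real N powr (b - 1) * A N) \<longlonglongrightarrow> c"
    unfolding A_def c_def by (rule weighted_cesaro_tendsto[OF b])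
  then have "(\<lambda>N. (real N powr (b - 1) * A N - c) ^ 2 + C * real N powr (b - 1)) \<longlonglongrightarrow> (c - c) ^ 2 + C * 0"
    using b by (intro tendsto_add tendsto_power tendsto_diff tendsto_const tendsto_mult tendsto_neg_powr
        filterlim_real_sequentially) auto
  then have lim: "(\<lambda>N. (real N powr (b - 1) * A N - c) ^ 2 + C * real N powr (b - 1)) \<longlonglongrightarrow> 0"
    by simp
  have "\<forall>\<^sub>F N in sequentially. 0 \<le> Y N"
    unfolding Y_def by (intro always_eventually allI integral_nonneg_AE) auto
  moreover have "\<forall>\<^sub>F N in sequentially. Y N \<le> (real N powr (b - 1) * A N - c) ^ 2 + C * real N powr (b - 1)"
    using C by (intro eventually_sequentiallyI[of 1])
  ultimately have "Y \<longlonglongrightarrow> 0"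
    using lim by (rule tendsto_sandwich[OF _ _ tendsto_const])
  then show ?thesis
    by (simp add: Y_def)
qed

lemma ong_weight_L1_tendsto:
  defines "b \<equiv> \<alpha> / DIM('a)"
  defines "c \<equiv> Gamma (1 + b) * unit_ball_vol DIM('a) powr (- b) / (1 - b)"
  shows "(\<lambda>N. expectation (\<lambda>\<omega>. \<bar>real N powr (b - 1) * ong_weight \<alpha> (\<lambda>i. U i \<omega>) N - c\<bar>)) \<longlonglongrightarrow> 0"
proof (rule tendsto_sandwich[where f="\<lambda>_. 0"])
  show "\<forall>\<^sub>F N in sequentially. expectation (\<lambda>\<omega>. \<bar>real N powr (b - 1) * ong_weight \<alpha> (\<lambda>i. U i \<omega>) N - c\<bar>)
      \<le> sqrt (expectation (\<lambda>\<omega>. (real N powr (b - 1) * ong_weight \<alpha> (\<lambda>i. U i \<omega>) N - c) ^ 2))"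
  proof (intro always_eventually allI expectation_abs_le_sqrt)
    fix N
    show "integrable M (\<lambda>\<omega>. real N powr (b - 1) * ong_weight \<alpha> (\<lambda>i. U i \<omega>) N - c)"
      using integrable_ong_weight[of \<alpha> N] \<alpha> by simp
    have "(\<lambda>\<omega>. (real N powr (b - 1) * ong_weight \<alpha> (\<lambda>i. U i \<omega>) N - c) ^ 2)
        = (\<lambda>\<omega>. (real N powr (b - 1)) ^ 2 * ong_weight \<alpha> (\<lambda>i. U i \<omega>) N ^ 2
          - 2 * c * real N powr (b - 1) * ong_weight \<alpha> (\<lambda>i. U i \<omega>) N + c ^ 2)"
      by (simp add: fun_eq_iff power2_eq_square algebra_simps)
    then show "integrable M (\<lambda>\<omega>. (real N powr (b - 1) * ong_weight \<alpha> (\<lambda>i. U i \<omega>) N - c) ^ 2)"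
      using integrable_ong_weight_square[of \<alpha> N] integrable_ong_weight[of \<alpha> N] \<alpha> by simp
  qed
  have "(\<lambda>N. sqrt (expectation (\<lambda>\<omega>. (real N powr (b - 1) * ong_weight \<alpha> (\<lambda>i. U i \<omega>) N - c) ^ 2))) \<longlonglongrightarrow> sqrt 0"
    unfolding b_def c_def by (intro tendsto_real_sqrt ong_weight_L2_tendsto)
  then show "(\<lambda>N. sqrt (expectation (\<lambda>\<omega>. (real N powr (b - 1) * ong_weight \<alpha> (\<lambda>i. U i \<omega>) N - c) ^ 2))) \<longlonglongrightarrow> 0"
    by simp
qed (auto intro!: always_eventually integral_nonneg_AE)

end

end

theorem theorem4:
  fixes M :: "'b measure" and U :: "nat \<Rightarrow> 'b \<Rightarrow> 'a::euclidean_space" and \<alpha> :: real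
  assumes "prob_space M"
    and "prob_space.indep_vars M (\<lambda>_. borel) U UNIV"
    and "\<And>i. distr M borel (U i) = uniform_measure lborel (box 0 One)"
    and "0 \<le> \<alpha>" and "\<alpha> < real DIM('a)"
  shows "(\<forall>n. integrable M (\<lambda>\<omega>. real n powr ((\<alpha> - DIM('a)) / DIM('a)) * ong_weight \<alpha> (\<lambda>i. U i \<omega>) n))
    \<and> (\<lambda>n. LINT \<omega>|M. \<bar>real n powr ((\<alpha> - DIM('a)) / DIM('a)) * ong_weight \<alpha> (\<lambda>i. U i \<omega>) n
            - DIM('a) / (DIM('a) - \<alpha>) * unit_ball_volume DIM('a) powr (- \<alpha> / DIM('a))
              * Gamma (1 + \<alpha> / DIM('a))\<bar>) \<longlonglongrightarrow> 0"
proof -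
  interpret iid_uniform_cube M U
    using assms(1-3) by (simp add: iid_uniform_cube_def iid_uniform_cube_axioms_def cube_unif_def)
  define b where "b = \<alpha> / DIM('a)"
  have exponent: "(\<alpha> - DIM('a)) / DIM('a) = b - 1"
    by (simp add: b_def field_simps)
  have limit: "DIM('a) / (DIM('a) - \<alpha>) * unit_ball_volume DIM('a) powr (- \<alpha> / DIM('a)) * Gamma (1 + \<alpha> / DIM('a))
      = Gamma (1 + b) * unit_ball_vol DIM('a) powr (- b) / (1 - b)"
    using assms(5) by (simp add: b_def unit_ball_volume_eq field_simps)
  show ?thesis
  proof (cases "\<alpha> = 0")
    case True
    moreover have "unit_ball_volume DIM('a) > 0"
      by (simp add: unit_ball_volume_eq)
    ultimately show ?thesis
      using ong_weight_0_rescaled_tendsto[of "DIM('a)"] by (simp add: ong_weight_0 prob_space)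
  next
    case False
    with assms(4,5) have \<alpha>: "0 < \<alpha>" "\<alpha> < DIM('a)" by auto
    then show ?thesis
      using integrable_ong_weight ong_weight_L1_tendsto[OF \<alpha>]
      unfolding exponent limit b_def by simp
  qed
qed

end
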